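(* Let $\{\ket{\Phi_b}\}_{b=1}^{2^{n+m}}$ be a stabilizer basis of $\mathcal{H}_n\otimes\mathcal{H}_m$, let $\ket\psi\in\mathcal{H}_m$ be an arbitrary unit vector, and let $\mu_b=(I\otimes\bra\psi)\ket{\Phi_b}\!\bra{\Phi_b}(I\otimes\ket\psi)$. Let $p$ be the entanglement entropy of the states $\ket{\Phi_b}$ across the bipartition $\mathcal{H}_n|\mathcal{H}_m$. Then $s_{\boldsymbol\mu}\le 2^{n+p}$. In particular, for a given such stabilizer basis, an informationally complete POVM of this form (for a suitable $\ket\psi$) is possible if and only if the states $\ket{\Phi_b}$ are maximally entangled, i.e. $m\ge n$ and $p=n$.
   Context: $\mathcal{H}_n=(\mathbb{C}^2)^{\otimes n}$ (data qubits), $\mathcal{H}_m=(\mathbb{C}^2)^{\otimes m}$ (ancilla qubits). A stabilizer basis of $k$ qubits is the orthonormal basis of common eigenvectors of $k$ independent pairwise commuting Pauli operators; such bases arise as $\ket{\Phi_b}=U^\dagger\ket{\Phi'_b}$ with $U$ Clifford and $\{\ket{\Phi_b'}\}$ a stabilizer basis. The entanglement entropy of a pure state is the von Neumann entropy (base 2) of its reduced state on $\mathcal{H}_n$; for a stabilizer basis this is an integer $0\le p\le\min(n,m)$, the same for all basis elements. $s_{\boldsymbol\mu}=\dim\operatorname{span}(\{\mu_b\})$; $\boldsymbol\mu$ is informationally complete (IC) if $s_{\boldsymbol\mu}=4^n$. *)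

theory Defs
  imports "Jordan_Normal_Form.VS_Connect" "Jordan_Normal_Form.Char_Poly"
begin

definition ket :: "complex vec \<Rightarrow> complex mat" where
  "ket v = mat (dim_vec v) 1 (\<lambda>(i, j). v $ i)"

definition bra :: "complex vec \<Rightarrow> complex mat" where
  "bra v = mat 1 (dim_vec v) (\<lambda>(i, j). cnj (v $ j))"

text \<open>Kronecker (tensor) product; the index of the first factor is the most significant one,
  i.e. basis vector (i,j) of A-space tensor B-space has index i * dim_B + j.\<close>
definition kron :: "complex mat \<Rightarrow> complex mat \<Rightarrow> complex mat" where
  "kron A B = mat (dim_row A * dim_row B) (dim_col A * dim_col B)
     (\<lambda>(i, j). A $$ (i div dim_row B, j div dim_col B) * B $$ (i mod dim_row B, j mod dim_col B))"

definition unit_state :: "nat \<Rightarrow> complex vec \<Rightarrow> bool" where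
  "unit_state k v \<longleftrightarrow> v \<in> carrier_vec (2 ^ k) \<and> v \<bullet>c v = 1"

text \<open>A single-qubit Pauli letter is encoded by its symplectic bits (x,z):
  (False,False) = I, (True,False) = X, (False,True) = Z, (True,True) = Y.\<close>
definition pauli1 :: "bool \<times> bool \<Rightarrow> complex mat" where
  "pauli1 p = (case p of
      (False, False) \<Rightarrow> mat_of_rows_list 2 [[1, 0], [0, 1]]
    | (True, False)  \<Rightarrow> mat_of_rows_list 2 [[0, 1], [1, 0]]
    | (False, True)  \<Rightarrow> mat_of_rows_list 2 [[1, 0], [0, -1]]
    | (True, True)   \<Rightarrow> mat_of_rows_list 2 [[0, -\<i>], [\<i>, 0]])"

text \<open>Pauli string operator (tensor product of single-qubit Paulis; signs are irrelevant
  for common eigenvectors, so Hermitian Pauli operators are considered up to sign).\<close>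
fun pauli_mat :: "(bool \<times> bool) list \<Rightarrow> complex mat" where
  "pauli_mat [] = 1\<^sub>m 1"
| "pauli_mat (p # ps) = kron (pauli1 p) (pauli_mat ps)"

text \<open>Independence of the Pauli operators P 0, ..., P (k-1): no nonempty product of them is
  proportional to the identity, i.e. their symplectic vectors are linearly independent over GF(2).\<close>
definition pauli_independent :: "nat \<Rightarrow> nat \<Rightarrow> (nat \<Rightarrow> (bool \<times> bool) list) \<Rightarrow> bool" where
  "pauli_independent q k P \<longleftrightarrow>
     (\<forall>S \<subseteq> {..<k}. S \<noteq> {} \<longrightarrow>
        (\<exists>i<q. odd (card {j \<in> S. fst (P j ! i)}) \<or> odd (card {j \<in> S. snd (P j ! i)})))"

definition stabilizer_basis :: "nat \<Rightarrow> (nat \<Rightarrow> complex vec) \<Rightarrow> bool" where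
  "stabilizer_basis k \<Phi> \<longleftrightarrow>
     (\<forall>b < 2 ^ k. \<Phi> b \<in> carrier_vec (2 ^ k)) \<and>
     (\<forall>b < 2 ^ k. \<forall>b' < 2 ^ k. \<Phi> b \<bullet>c \<Phi> b' = (if b = b' then 1 else 0)) \<and>
     (\<exists>P :: nat \<Rightarrow> (bool \<times> bool) list.
        (\<forall>j < k. length (P j) = k) \<and>
        (\<forall>i < k. \<forall>j < k. pauli_mat (P i) * pauli_mat (P j) = pauli_mat (P j) * pauli_mat (P i)) \<and>
        pauli_independent k k P \<and>
        (\<forall>b < 2 ^ k. \<forall>j < k. \<exists>ev. eigenvector (pauli_mat (P j)) (\<Phi> b) ev))"

definition reduced_state :: "nat \<Rightarrow> nat \<Rightarrow> complex vec \<Rightarrow> complex mat" where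
  "reduced_state n m v = mat (2 ^ n) (2 ^ n)
     (\<lambda>(i, i'). \<Sum>j < 2 ^ m. v $ (i * 2 ^ m + j) * cnj (v $ (i' * 2 ^ m + j)))"

text \<open>Von Neumann entropy (base 2): - sum of lambda log2 lambda over the eigenvalues lambda,
  counted with (algebraic) multiplicity; 0 log 0 = 0 holds since log 2 0 = 0.\<close>
definition von_neumann_entropy :: "complex mat \<Rightarrow> real" where
  "von_neumann_entropy \<rho> =
     - (\<Sum>e \<in> {e. poly (char_poly \<rho>) e = 0}.
          real (order e (char_poly \<rho>)) * (Re e * log 2 (Re e)))"

definition entanglement_entropy :: "nat \<Rightarrow> nat \<Rightarrow> complex vec \<Rightarrow> real" where
  "entanglement_entropy n m v = von_neumann_entropy (reduced_state n m v)"

definition povm_elem :: "nat \<Rightarrow> complex vec \<Rightarrow> complex vec \<Rightarrow> complex mat" where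
  "povm_elem n \<psi> \<phi> = kron (1\<^sub>m (2 ^ n)) (bra \<psi>) * (ket \<phi> * bra \<phi>) * kron (1\<^sub>m (2 ^ n)) (ket \<psi>)"

definition span_dim :: "nat \<Rightarrow> complex mat set \<Rightarrow> nat" where
  "span_dim N S = vectorspace.dim class_ring
     ((module_mat TYPE(complex) N N)\<lparr>carrier := LinearCombinations.module.span class_ring (module_mat TYPE(complex) N N) S\<rparr>)"

definition s_mu :: "nat \<Rightarrow> nat \<Rightarrow> (nat \<Rightarrow> complex vec) \<Rightarrow> complex vec \<Rightarrow> nat" where
  "s_mu n m \<Phi> \<psi> = span_dim (2 ^ n) {povm_elem n \<psi> (\<Phi> b) | b. b < 2 ^ (n + m)}"

end

(* The stabilizer group of the basis consists of the 2^(n+m) products g_S of the generators, and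
   |Phi_b><Phi_b| = 2^-(n+m) sum_S lambda_b(S) g_S, where the character lambda_b records the
   eigenvalues of Phi_b. Writing g_S = omega_S P_A(S) (x) P_B(S) with Pauli strings P_A(S), P_B(S),
   the reduced state of Phi_b is 2^-n times the sum of lambda_b(S) omega_S P_A(S) over the subgroup
   G_A = {S. P_B(S) = I}. It is |G_A| / 2^n times a projection, so p = n - log2 |G_A|.
   Every mu_b is a combination of the Pauli strings P_A(S), of which there are
   4^n / |G_A| = 2^(n+p): the fibres of S -> P_A(S) are cosets of G_B, and equating the purities of
   the two reductions gives |G_A| 2^m = |G_B| 2^n. Conversely, summing lambda_b(S) mu_b over b
   isolates omega_S <psi|P_B(S)|psi> P_A(S); for a product state psi with no vanishing Pauli
   expectation these span all the P_A(S), which are linearly independent, so s_mu = 2^(n+p).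
   This is 4^n exactly when |G_A| = 1, i.e. p = n, and then 2^m = |G_B| 2^n forces m >= n. *)

theory Submission
  imports Defs "Jordan_Normal_Form.Schur_Decomposition"
begin

lemma sum_lessThan_add: "(\<Sum>l<(x::nat) + y. f l) = (\<Sum>l<x. f l) + (\<Sum>q<y. f (x + q))"
  by (induct y) (auto simp: add_ac)

lemma sum_lessThan_mult_nat:
  "(\<Sum>l<(a::nat) * b. f l) = (\<Sum>p<a. \<Sum>q<b. f (p * b + q))"
proof (induct a)
  case (Suc a)
  have "(\<Sum>l<Suc a * b. f l) = (\<Sum>l<a * b + b. f l)" by (simp add: add.commute)
  also have "\<dots> = (\<Sum>l<a * b. f l) + (\<Sum>q<b. f (a * b + q))"
    by (rule sum_lessThan_add)
  finally show ?case using Suc by simp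
qed simp

lemma mult_add_less_mult_nat: "i < (a::nat) \<Longrightarrow> j < b \<Longrightarrow> i * b + j < a * b"
proof -
  assume "i < a" "j < b"
  then have "i * b + j < Suc i * b" by simp
  also have "\<dots> \<le> a * b" using \<open>i < a\<close> by (intro mult_le_mono1) simp
  finally show ?thesis .
qed

lemma mod_mult_div_nat: "0 < c \<Longrightarrow> (i::nat) mod (b * c) div c = i div c mod b"
proof -
  assume c: "0 < c"
  have "i mod (b * c) = c * (i div c mod b) + i mod c" by (metis mod_mult2_eq mult.commute)
  then show ?thesis using c by simp
qed

lemma mat_index_mult_sum:
  "A \<in> carrier_mat r s \<Longrightarrow> B \<in> carrier_mat s c \<Longrightarrow> i < r \<Longrightarrow> j < c \<Longrightarrow>
   (A * B) $$ (i, j) = (\<Sum>l<s. A $$ (i, l) * B $$ (l, j))"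
  by (simp add: scalar_prod_def atLeast0LessThan)

lemma smult_one_mat_left [simp]: "(1::'a::semiring_1) \<cdot>\<^sub>m A = A"
  by (rule eq_matI) auto

lemma smult_smult_mat: "a \<cdot>\<^sub>m (b \<cdot>\<^sub>m A) = (a * b :: 'a::semigroup_mult) \<cdot>\<^sub>m A"
  by (rule eq_matI) (auto simp: mult.assoc)

lemma smult_vec_eq_self_imp_one:
  assumes "v \<in> carrier_vec d" "v \<noteq> 0\<^sub>v d" "c \<cdot>\<^sub>v v = v"
  shows "(c::'a::idom) = 1"
proof -
  obtain i where i: "i < d" "v $ i \<noteq> 0"
    using assms(1,2) by (metis carrier_vecD eq_vecI index_zero_vec)
  have "c * v $ i = v $ i" using arg_cong[OF assms(3), of "\<lambda>w. w $ i"] i assms(1) by simp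
  then show ?thesis using i by simp
qed


definition trace :: "'a::comm_ring_1 mat \<Rightarrow> 'a" where
  "trace A = (\<Sum>i<dim_row A. A $$ (i, i))"

lemma trace_one_mat [simp]: "trace (1\<^sub>m n) = of_nat n"
  unfolding trace_def by simp

lemma trace_smult: "A \<in> carrier_mat n n \<Longrightarrow> trace (c \<cdot>\<^sub>m A) = c * trace A"
  unfolding trace_def by (auto simp: sum_distrib_left)

lemma trace_mult_comm:
  "A \<in> carrier_mat r s \<Longrightarrow> B \<in> carrier_mat s r \<Longrightarrow> trace (A * B) = trace (B * A)"
  unfolding trace_def
  by (simp add: scalar_prod_def atLeast0LessThan sum.swap[of _ "{..<s}"] mult.commute)

lemma trace_mult_self:
  "A \<in> carrier_mat n n \<Longrightarrow> trace (A * A) = (\<Sum>i<n. \<Sum>i'<n. A $$ (i, i') * A $$ (i', i))"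
  unfolding trace_def by (intro sum.cong refl) (auto simp: scalar_prod_def atLeast0LessThan)

lemma trace_similar_mat: "similar_mat A B \<Longrightarrow> trace A = trace B"
proof -
  assume "similar_mat A B"
  then obtain n P Q where PQ: "{A, B, P, Q} \<subseteq> carrier_mat n n" "P * Q = 1\<^sub>m n" "Q * P = 1\<^sub>m n"
    and AB: "A = P * B * Q"
    by (blast dest: similar_matD)
  have "trace A = trace (P * (B * Q))" unfolding AB using PQ by (simp add: assoc_mult_mat[of P n n B n Q n])
  also have "\<dots> = trace ((B * Q) * P)" using PQ by (intro trace_mult_comm[of _ n n]) auto
  also have "\<dots> = trace B" using PQ by (simp add: assoc_mult_mat[of B n n Q n P n] right_mult_one_mat[of B n n])
  finally show ?thesis .
qed

lemma kron_dims [simp]: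
  "dim_row (kron A B) = dim_row A * dim_row B" "dim_col (kron A B) = dim_col A * dim_col B"
  unfolding kron_def by auto

lemma kron_carrier [simp]:
  "kron A B \<in> carrier_mat (dim_row A * dim_row B) (dim_col A * dim_col B)"
  unfolding kron_def by auto

lemma kron_index [simp]:
  "i < dim_row A * dim_row B \<Longrightarrow> j < dim_col A * dim_col B \<Longrightarrow>
   kron A B $$ (i, j) = A $$ (i div dim_row B, j div dim_col B) * B $$ (i mod dim_row B, j mod dim_col B)"
  unfolding kron_def by auto

lemma kron_index_mult_add:
  assumes "A \<in> carrier_mat a1 a2" "B \<in> carrier_mat b1 b2"
    and "i < a1" "i' < a2" "j < b1" "j' < b2"
  shows "kron A B $$ (i * b1 + j, i' * b2 + j') = A $$ (i, i') * B $$ (j, j')"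
  using assms mult_add_less_mult_nat[of i a1 j b1] mult_add_less_mult_nat[of i' a2 j' b2] by simp

lemma kron_mult:
  assumes A: "A \<in> carrier_mat a1 a2" and B: "B \<in> carrier_mat b1 b2"
    and C: "C \<in> carrier_mat a2 a3" and D: "D \<in> carrier_mat b2 b3"
  shows "kron A B * kron C D = kron (A * C) (B * D)"
proof (rule eq_matI)
  fix i j assume "i < dim_row (kron (A * C) (B * D))" "j < dim_col (kron (A * C) (B * D))"
  then have ij: "i < a1 * b1" "j < a3 * b3" using A B C D by auto
  then have b: "b1 > 0" "b3 > 0" by (auto intro: gr0I)
  have "(kron A B * kron C D) $$ (i, j) = (\<Sum>l<a2 * b2. kron A B $$ (i, l) * kron C D $$ (l, j))"
    using ij A B C D by (simp add: scalar_prod_def atLeast0LessThan)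
  also have "\<dots> = (\<Sum>p<a2. \<Sum>q<b2. kron A B $$ (i, p * b2 + q) * kron C D $$ (p * b2 + q, j))"
    by (rule sum_lessThan_mult_nat)
  also have "\<dots> = (\<Sum>p<a2. \<Sum>q<b2. (A $$ (i div b1, p) * C $$ (p, j div b3)) *
                                   (B $$ (i mod b1, q) * D $$ (q, j mod b3)))"
    using A B C D ij b by (intro sum.cong refl) (simp add: mult_add_less_mult_nat)
  also have "\<dots> = (\<Sum>p<a2. A $$ (i div b1, p) * C $$ (p, j div b3)) *
                  (\<Sum>q<b2. B $$ (i mod b1, q) * D $$ (q, j mod b3))"
    by (simp add: sum_product)
  also have "\<dots> = kron (A * C) (B * D) $$ (i, j)"
    using A B C D ij b by (simp add: scalar_prod_def atLeast0LessThan less_mult_imp_div_less)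
  finally show "(kron A B * kron C D) $$ (i, j) = kron (A * C) (B * D) $$ (i, j)" .
qed (use A B C D in auto)

lemma kron_smult_left: "kron (c \<cdot>\<^sub>m A) B = c \<cdot>\<^sub>m kron A B"
  by (rule eq_matI) (auto simp: less_mult_imp_div_less)

lemma kron_smult_right: "kron A (c \<cdot>\<^sub>m B) = c \<cdot>\<^sub>m kron A B"
proof -
  have "i mod dim_row B < dim_row B" "j mod dim_col B < dim_col B"
    if "i < dim_row A * dim_row B" "j < dim_col A * dim_col B" for i j
    using that by (metis mod_less_divisor mult_is_0 not_gr0 not_less_zero)+
  then show ?thesis by (intro eq_matI) (auto simp: less_mult_imp_div_less)
qed

lemma kron_one_mat: "kron (1\<^sub>m a) (1\<^sub>m b) = 1\<^sub>m (a * b)"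
proof (rule eq_matI)
  fix i j assume "i < dim_row (1\<^sub>m (a * b))" "j < dim_col (1\<^sub>m (a * b))"
  then have ij: "i < a * b" "j < a * b" by auto
  then have b: "b > 0" by (auto intro: gr0I)
  have "(i div b = j div b \<and> i mod b = j mod b) = (i = j)"
    by (metis div_mult_mod_eq)
  then show "kron (1\<^sub>m a) (1\<^sub>m b) $$ (i, j) = 1\<^sub>m (a * b) $$ (i, j)"
    using ij b by (auto simp: less_mult_imp_div_less)
qed auto

lemma kron_one_mat_1_left [simp]: "kron (1\<^sub>m (Suc 0)) B = B"
  by (rule eq_matI) auto

lemma kron_right_1x1: "X \<in> carrier_mat 1 1 \<Longrightarrow> kron A X = X $$ (0, 0) \<cdot>\<^sub>m A"
  by (rule eq_matI) auto

lemma kron_assoc: "kron (kron A B) C = kron A (kron B C)"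
proof (rule eq_matI)
  fix i j assume i: "i < dim_row (kron A (kron B C))" and j: "j < dim_col (kron A (kron B C))"
  let ?ra = "dim_row A" and ?rb = "dim_row B" and ?rc = "dim_row C"
  let ?ca = "dim_col A" and ?cb = "dim_col B" and ?cc = "dim_col C"
  from i j have ij: "i < ?ra * ?rb * ?rc" "j < ?ca * ?cb * ?cc" by (simp_all add: mult.assoc)
  then have pos: "?rc > 0" "?rb > 0" "?cc > 0" "?cb > 0" by (auto intro: gr0I)
  have "i div ?rc div ?rb = i div (?rb * ?rc)" "j div ?cc div ?cb = j div (?cb * ?cc)"
    by (metis div_mult2_eq mult.commute)+
  moreover have "i mod (?rb * ?rc) div ?rc = i div ?rc mod ?rb"
    "j mod (?cb * ?cc) div ?cc = j div ?cc mod ?cb"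
    using pos by (simp_all add: mod_mult_div_nat)
  moreover have "i div ?rc < ?ra * ?rb" "j div ?cc < ?ca * ?cb"
    using ij pos by (simp_all add: less_mult_imp_div_less)
  ultimately show "kron (kron A B) C $$ (i, j) = kron A (kron B C) $$ (i, j)"
    using ij pos by (simp add: mod_mod_cancel mult.assoc)
qed (auto simp: mult.assoc)

lemma trace_kron:
  assumes "A \<in> carrier_mat a a" "B \<in> carrier_mat b b"
  shows "trace (kron A B) = trace A * trace B"
proof -
  have "trace (kron A B) = (\<Sum>l<a * b. kron A B $$ (l, l))"
    unfolding trace_def using assms by simp
  also have "\<dots> = (\<Sum>p<a. \<Sum>q<b. kron A B $$ (p * b + q, p * b + q))"
    by (rule sum_lessThan_mult_nat)
  also have "\<dots> = (\<Sum>p<a. \<Sum>q<b. A $$ (p, p) * B $$ (q, q))"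
    by (intro sum.cong refl) (use kron_index_mult_add[OF assms] in simp)
  also have "\<dots> = trace A * trace B"
    unfolding trace_def using assms by (simp add: sum_product)
  finally show ?thesis .
qed


definition mat_sum :: "nat \<Rightarrow> nat \<Rightarrow> ('i \<Rightarrow> 'a::comm_monoid_add mat) \<Rightarrow> 'i set \<Rightarrow> 'a mat" where
  "mat_sum r c f I = mat r c (\<lambda>(i, j). \<Sum>x\<in>I. f x $$ (i, j))"

lemma mat_sum_carrier [simp]: "mat_sum r c f I \<in> carrier_mat r c"
  and mat_sum_dims [simp]: "dim_row (mat_sum r c f I) = r" "dim_col (mat_sum r c f I) = c"
  by (auto simp: mat_sum_def)

lemma mat_sum_index [simp]:
  "i < r \<Longrightarrow> j < c \<Longrightarrow> mat_sum r c f I $$ (i, j) = (\<Sum>x\<in>I. f x $$ (i, j))"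
  by (simp add: mat_sum_def)

lemma mat_sum_cong: "(\<And>x. x \<in> I \<Longrightarrow> f x = g x) \<Longrightarrow> mat_sum r c f I = mat_sum r c g I"
  unfolding mat_sum_def by (auto intro!: cong_mat sum.cong)

lemma mat_sum_empty [simp]: "mat_sum r c f {} = 0\<^sub>m r c"
  by (rule eq_matI) auto

lemma mat_sum_insert:
  "finite I \<Longrightarrow> x \<notin> I \<Longrightarrow> f x \<in> carrier_mat r c \<Longrightarrow>
   mat_sum r c f (insert x I) = f x + mat_sum r c f I"
  by (rule eq_matI) auto

lemma mat_sum_filter:
  "finite I \<Longrightarrow> mat_sum r c (\<lambda>x. if P x then f x else 0\<^sub>m r c) I = mat_sum r c f {x \<in> I. P x}"
  by (rule eq_matI) (auto simp: sum.inter_filter if_distrib[of "\<lambda>A. A $$ _"] cong: if_cong)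

lemma smult_mat_sum:
  fixes a :: "'a::comm_semiring_0"
  assumes "\<And>x. x \<in> I \<Longrightarrow> f x \<in> carrier_mat r c"
  shows "a \<cdot>\<^sub>m mat_sum r c f I = mat_sum r c (\<lambda>x. a \<cdot>\<^sub>m f x) I"
proof (rule eq_matI)
  fix i j assume ij: "i < dim_row (mat_sum r c (\<lambda>x. a \<cdot>\<^sub>m f x) I)" "j < dim_col (mat_sum r c (\<lambda>x. a \<cdot>\<^sub>m f x) I)"
  have "(a \<cdot>\<^sub>m f x) $$ (i, j) = a * f x $$ (i, j)" if "x \<in> I" for x
    using assms[OF that] ij by auto
  then show "(a \<cdot>\<^sub>m mat_sum r c f I) $$ (i, j) = mat_sum r c (\<lambda>x. a \<cdot>\<^sub>m f x) I $$ (i, j)"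
    using ij by (simp add: sum_distrib_left)
qed auto

lemma mult_mat_sum_left:
  assumes "A \<in> carrier_mat r s" "\<And>x. x \<in> I \<Longrightarrow> f x \<in> carrier_mat s c"
  shows "A * mat_sum s c f I = mat_sum r c (\<lambda>x. A * f x) I"
proof (rule eq_matI)
  fix i j assume "i < dim_row (mat_sum r c (\<lambda>x. A * f x) I)" "j < dim_col (mat_sum r c (\<lambda>x. A * f x) I)"
  then have ij: "i < r" "j < c" by auto
  have "(A * mat_sum s c f I) $$ (i, j) = (\<Sum>l<s. A $$ (i, l) * (\<Sum>x\<in>I. f x $$ (l, j)))"
    using assms ij by (simp add: scalar_prod_def atLeast0LessThan)
  also have "\<dots> = (\<Sum>x\<in>I. \<Sum>l<s. A $$ (i, l) * f x $$ (l, j))"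
    by (simp add: sum_distrib_left sum.swap[of _ I])
  also have "\<dots> = mat_sum r c (\<lambda>x. A * f x) I $$ (i, j)"
    using ij by (simp, intro sum.cong refl, subst mat_index_mult_sum[OF assms(1) assms(2)]) auto
  finally show "(A * mat_sum s c f I) $$ (i, j) = mat_sum r c (\<lambda>x. A * f x) I $$ (i, j)" .
qed (use assms in auto)

lemma mult_mat_sum_right:
  assumes "B \<in> carrier_mat s c" "\<And>x. x \<in> I \<Longrightarrow> f x \<in> carrier_mat r s"
  shows "mat_sum r s f I * B = mat_sum r c (\<lambda>x. f x * B) I"
proof (rule eq_matI)
  fix i j assume "i < dim_row (mat_sum r c (\<lambda>x. f x * B) I)" "j < dim_col (mat_sum r c (\<lambda>x. f x * B) I)"
  then have ij: "i < r" "j < c" by auto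
  have "(mat_sum r s f I * B) $$ (i, j) = (\<Sum>l<s. (\<Sum>x\<in>I. f x $$ (i, l)) * B $$ (l, j))"
    using assms ij by (simp add: scalar_prod_def atLeast0LessThan)
  also have "\<dots> = (\<Sum>x\<in>I. \<Sum>l<s. f x $$ (i, l) * B $$ (l, j))"
    by (simp add: sum_distrib_right sum.swap[of _ I])
  also have "\<dots> = mat_sum r c (\<lambda>x. f x * B) I $$ (i, j)"
    using ij by (simp, intro sum.cong refl, subst mat_index_mult_sum[OF assms(2) assms(1)]) auto
  finally show "(mat_sum r s f I * B) $$ (i, j) = mat_sum r c (\<lambda>x. f x * B) I $$ (i, j)" .
qed (use assms in auto)

lemma trace_mat_sum:
  "(\<And>x. x \<in> I \<Longrightarrow> f x \<in> carrier_mat r r) \<Longrightarrow> trace (mat_sum r r f I) = (\<Sum>x\<in>I. trace (f x))"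
  unfolding trace_def by (auto simp: sum.swap[of _ I] intro!: sum.cong)

lemma mat_sum_reindex_bij:
  assumes "bij_betw h I J"
  shows "mat_sum r c (\<lambda>x. f (h x)) I = mat_sum r c f J"
proof (rule eq_matI)
  fix i j assume "i < dim_row (mat_sum r c f J)" "j < dim_col (mat_sum r c f J)"
  then show "mat_sum r c (\<lambda>x. f (h x)) I $$ (i, j) = mat_sum r c f J $$ (i, j)"
    using sum.reindex_bij_betw[OF assms, of "\<lambda>x. f x $$ (i, j)"] by simp
qed auto

lemma mat_sum_const:
  "A \<in> carrier_mat r c \<Longrightarrow> mat_sum r c (\<lambda>x. A) I = of_nat (card I) \<cdot>\<^sub>m (A :: 'a::comm_semiring_1 mat)"
  by (rule eq_matI) auto

lemma mat_sum_square_group: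
  fixes f :: "'i \<Rightarrow> complex mat"
  assumes f: "\<And>x. x \<in> I \<Longrightarrow> f x \<in> carrier_mat N N"
    and mult: "\<And>x y. x \<in> I \<Longrightarrow> y \<in> I \<Longrightarrow> f x * f y = a \<cdot>\<^sub>m f (mul x y)"
    and bij: "\<And>x. x \<in> I \<Longrightarrow> bij_betw (mul x) I I"
  shows "mat_sum N N f I * mat_sum N N f I = (a * of_nat (card I)) \<cdot>\<^sub>m mat_sum N N f I"
proof -
  have "mat_sum N N f I * mat_sum N N f I = mat_sum N N (\<lambda>x. f x * mat_sum N N f I) I"
    using f by (intro mult_mat_sum_right) auto
  also have "\<dots> = mat_sum N N (\<lambda>x. a \<cdot>\<^sub>m mat_sum N N f I) I"
  proof (rule mat_sum_cong)
    fix x assume x: "x \<in> I"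
    have "f x * mat_sum N N f I = mat_sum N N (\<lambda>y. a \<cdot>\<^sub>m f (mul x y)) I"
      using f x by (subst mult_mat_sum_left[of _ N N]) (auto intro!: mat_sum_cong simp: mult)
    also have "\<dots> = a \<cdot>\<^sub>m mat_sum N N (\<lambda>y. f (mul x y)) I"
      using f bij[OF x] by (subst smult_mat_sum) (auto dest: bij_betwE)
    finally show "f x * mat_sum N N f I = a \<cdot>\<^sub>m mat_sum N N f I"
      using mat_sum_reindex_bij[OF bij[OF x], of N N f] by simp
  qed
  also have "\<dots> = (a * of_nat (card I)) \<cdot>\<^sub>m mat_sum N N f I"
    by (simp add: mat_sum_const smult_smult_mat mult.commute)
  finally show ?thesis .
qed

lemma sandwich_mat_sum:
  assumes "L \<in> carrier_mat r s" "R \<in> carrier_mat s c" "\<And>x. x \<in> I \<Longrightarrow> f x \<in> carrier_mat s s"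
  shows "L * mat_sum s s f I * R = mat_sum r c (\<lambda>x. L * f x * R) I"
proof -
  have "L * mat_sum s s f I = mat_sum r s (\<lambda>x. L * f x) I" by (rule mult_mat_sum_left) (use assms in auto)
  moreover have "mat_sum r s (\<lambda>x. L * f x) I * R = mat_sum r c (\<lambda>x. L * f x * R) I"
    by (rule mult_mat_sum_right) (use assms in auto)
  ultimately show ?thesis by simp
qed

lemma sandwich_smult:
  fixes L X R :: "'a::comm_ring_1 mat"
  shows "L \<in> carrier_mat r s \<Longrightarrow> X \<in> carrier_mat s s \<Longrightarrow> R \<in> carrier_mat s c \<Longrightarrow>
   L * (a \<cdot>\<^sub>m X) * R = a \<cdot>\<^sub>m (L * X * R)"
  by (subst mult_smult_distrib[of L r s X s], assumption+, rule mult_smult_assoc_mat[of _ r s R c])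
    (auto intro: mult_carrier_mat)


definition partial_trace_right :: "nat \<Rightarrow> nat \<Rightarrow> 'a::comm_monoid_add mat \<Rightarrow> 'a mat" where
  "partial_trace_right N M X = mat N N (\<lambda>(i, i'). \<Sum>j<M. X $$ (i * M + j, i' * M + j))"

definition partial_trace_left :: "nat \<Rightarrow> nat \<Rightarrow> 'a::comm_monoid_add mat \<Rightarrow> 'a mat" where
  "partial_trace_left N M X = mat M M (\<lambda>(j, j'). \<Sum>i<N. X $$ (i * M + j, i * M + j'))"

lemma partial_trace_carrier [simp]:
  "partial_trace_right N M X \<in> carrier_mat N N" "partial_trace_left N M X \<in> carrier_mat M M"
  unfolding partial_trace_right_def partial_trace_left_def by auto

lemma partial_trace_right_mat_sum:
  "partial_trace_right N M (mat_sum (N * M) (N * M) f I) = mat_sum N N (\<lambda>x. partial_trace_right N M (f x)) I"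
  unfolding partial_trace_right_def
  by (rule eq_matI) (auto simp: mult_add_less_mult_nat sum.swap[of _ I])

lemma partial_trace_left_mat_sum:
  "partial_trace_left N M (mat_sum (N * M) (N * M) f I) = mat_sum M M (\<lambda>x. partial_trace_left N M (f x)) I"
  unfolding partial_trace_left_def
  by (rule eq_matI) (auto simp: mult_add_less_mult_nat sum.swap[of _ I])

lemma partial_trace_right_smult:
  "X \<in> carrier_mat (N * M) (N * M) \<Longrightarrow> partial_trace_right N M (c \<cdot>\<^sub>m X) = c \<cdot>\<^sub>m partial_trace_right N M X"
  for c :: "'a::comm_semiring_0"
  unfolding partial_trace_right_def
  by (rule eq_matI) (auto simp: mult_add_less_mult_nat sum_distrib_left)

lemma partial_trace_left_smult:
  "X \<in> carrier_mat (N * M) (N * M) \<Longrightarrow> partial_trace_left N M (c \<cdot>\<^sub>m X) = c \<cdot>\<^sub>m partial_trace_left N M X"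
  for c :: "'a::comm_semiring_0"
  unfolding partial_trace_left_def
  by (rule eq_matI) (auto simp: mult_add_less_mult_nat sum_distrib_left)

lemma partial_trace_right_kron:
  "A \<in> carrier_mat N N \<Longrightarrow> B \<in> carrier_mat M M \<Longrightarrow> partial_trace_right N M (kron A B) = trace B \<cdot>\<^sub>m A"
  unfolding partial_trace_right_def trace_def
  by (rule eq_matI) (auto simp: kron_index_mult_add sum_distrib_left mult.commute)

lemma partial_trace_left_kron:
  "A \<in> carrier_mat N N \<Longrightarrow> B \<in> carrier_mat M M \<Longrightarrow> partial_trace_left N M (kron A B) = trace A \<cdot>\<^sub>m B"
  unfolding partial_trace_left_def trace_def
  by (rule eq_matI) (auto simp: kron_index_mult_add sum_distrib_right)

lemma kron_one_mat_right_inj: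
  fixes X Y :: "complex mat"
  assumes "X \<in> carrier_mat N N" "Y \<in> carrier_mat N N" "M > 0" "kron X (1\<^sub>m M) = kron Y (1\<^sub>m M)"
  shows "X = Y"
proof -
  have "of_nat M \<cdot>\<^sub>m X = of_nat M \<cdot>\<^sub>m (Y :: complex mat)"
    using arg_cong[OF assms(4), of "partial_trace_right N M"] assms(1,2)
    by (simp add: partial_trace_right_kron)
  then have "(1 / of_nat M) \<cdot>\<^sub>m (of_nat M \<cdot>\<^sub>m X) = (1 / of_nat M) \<cdot>\<^sub>m (of_nat M \<cdot>\<^sub>m (Y :: complex mat))" by simp
  then show ?thesis using assms(3) by (simp add: smult_smult_mat)
qed

lemma ket_carrier [simp]: "ket v \<in> carrier_mat (dim_vec v) 1"
  and bra_carrier [simp]: "bra v \<in> carrier_mat 1 (dim_vec v)"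
  and ket_dims [simp]: "dim_row (ket v) = dim_vec v" "dim_col (ket v) = 1"
  and bra_dims [simp]: "dim_row (bra v) = 1" "dim_col (bra v) = dim_vec v"
  unfolding ket_def bra_def by auto

lemma ket_bra_carrier [simp]: "ket v * bra v \<in> carrier_mat (dim_vec v) (dim_vec v)"
  unfolding ket_def bra_def by auto

lemma ket_mult_bra: "ket v * bra v = mat (dim_vec v) (dim_vec v) (\<lambda>(i, j). v $ i * cnj (v $ j))"
  unfolding ket_def bra_def by (rule eq_matI) (simp_all add: scalar_prod_def)

lemma trace_ket_bra: "trace (ket v * bra v) = v \<bullet>c v"
  unfolding trace_def ket_mult_bra by (simp add: scalar_prod_def atLeast0LessThan)

lemma reduced_state_eq_partial_trace:
  "v \<in> carrier_vec (2 ^ (n + m)) \<Longrightarrow>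
   reduced_state n m v = partial_trace_right (2 ^ n) (2 ^ m) (ket v * bra v)"
  unfolding reduced_state_def partial_trace_right_def
  by (rule eq_matI) (auto simp: ket_mult_bra power_add mult_add_less_mult_nat)

lemma trace_partial_trace_right:
  "X \<in> carrier_mat (N * M) (N * M) \<Longrightarrow> trace (partial_trace_right N M X) = trace X"
  unfolding trace_def partial_trace_right_def by (simp add: sum_lessThan_mult_nat)

lemma sum_sum_product_transpose:
  fixes f :: "nat \<Rightarrow> nat \<Rightarrow> 'a::comm_semiring_0"
  shows "(\<Sum>i<a. \<Sum>i'<a. (\<Sum>j<c. f i j * g i' j) * (\<Sum>j'<c. f i' j' * g i j'))
       = (\<Sum>j<c. \<Sum>j'<c. (\<Sum>i<a. f i j * g i j') * (\<Sum>i'<a. f i' j' * g i' j))"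
proof -
  define T where "T i i' j j' = f i j * g i' j * (f i' j' * g i j')" for i i' j j'
  have "(\<Sum>i<a. \<Sum>i'<a. (\<Sum>j<c. f i j * g i' j) * (\<Sum>j'<c. f i' j' * g i j'))
      = (\<Sum>i<a. \<Sum>i'<a. \<Sum>j<c. \<Sum>j'<c. T i i' j j')"
    unfolding T_def by (simp add: sum_product)
  also have "\<dots> = (\<Sum>i<a. \<Sum>j<c. \<Sum>i'<a. \<Sum>j'<c. T i i' j j')"
    by (rule sum.cong[OF refl]) (rule sum.swap)
  also have "\<dots> = (\<Sum>j<c. \<Sum>i<a. \<Sum>j'<c. \<Sum>i'<a. T i i' j j')"
    by (subst sum.swap) (rule sum.cong[OF refl], rule sum.cong[OF refl], rule sum.swap)
  also have "\<dots> = (\<Sum>j<c. \<Sum>j'<c. \<Sum>i<a. \<Sum>i'<a. T i i' j j')"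
    by (rule sum.cong[OF refl], rule sum.swap)
  also have "\<dots> = (\<Sum>j<c. \<Sum>j'<c. (\<Sum>i<a. f i j * g i j') * (\<Sum>i'<a. f i' j' * g i' j))"
    unfolding T_def by (simp add: sum_product mult_ac)
  finally show ?thesis .
qed

lemma trace_partial_trace_square_eq:
  assumes "v \<in> carrier_vec (N * M)"
  shows "trace (partial_trace_right N M (ket v * bra v) * partial_trace_right N M (ket v * bra v))
       = trace (partial_trace_left N M (ket v * bra v) * partial_trace_left N M (ket v * bra v))"
proof -
  define f where "f i j = v $ (i * M + j)" for i j
  define g where "g i j = cnj (v $ (i * M + j))" for i j
  have "trace (partial_trace_right N M (ket v * bra v) * partial_trace_right N M (ket v * bra v))
      = (\<Sum>i<N. \<Sum>i'<N. (\<Sum>j<M. f i j * g i' j) * (\<Sum>j'<M. f i' j' * g i j'))"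
    using assms by (subst trace_mult_self[OF partial_trace_carrier(1)])
      (simp add: partial_trace_right_def ket_mult_bra mult_add_less_mult_nat f_def g_def)
  also have "\<dots> = (\<Sum>j<M. \<Sum>j'<M. (\<Sum>i<N. f i j * g i j') * (\<Sum>i'<N. f i' j' * g i' j))"
    by (rule sum_sum_product_transpose)
  also have "\<dots> = trace (partial_trace_left N M (ket v * bra v) * partial_trace_left N M (ket v * bra v))"
    using assms by (subst trace_mult_self[OF partial_trace_carrier(2)])
      (simp add: partial_trace_left_def ket_mult_bra mult_add_less_mult_nat f_def g_def)
  finally show ?thesis .
qed

definition expectation :: "complex vec \<Rightarrow> complex mat \<Rightarrow> complex" where
  "expectation \<psi> B = (bra \<psi> * B * ket \<psi>) $$ (0, 0)"

lemma kron_sandwich: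
  assumes \<psi>: "\<psi> \<in> carrier_vec M" and A: "A \<in> carrier_mat N N" and B: "B \<in> carrier_mat M M"
  shows "kron (1\<^sub>m N) (bra \<psi>) * kron A B * kron (1\<^sub>m N) (ket \<psi>) = expectation \<psi> B \<cdot>\<^sub>m A"
proof -
  have br: "bra \<psi> \<in> carrier_mat 1 M" and kt: "ket \<psi> \<in> carrier_mat M 1"
    using \<psi> bra_carrier[of \<psi>] ket_carrier[of \<psi>] by auto
  have "kron (1\<^sub>m N) (bra \<psi>) * kron A B * kron (1\<^sub>m N) (ket \<psi>) = kron A (bra \<psi> * B) * kron (1\<^sub>m N) (ket \<psi>)"
    using kron_mult[OF one_carrier_mat br A B] A by simp
  also have "\<dots> = kron A (bra \<psi> * B * ket \<psi>)"
    using kron_mult[OF A mult_carrier_mat[OF br B] one_carrier_mat kt] A by simp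
  also have "\<dots> = expectation \<psi> B \<cdot>\<^sub>m A"
    unfolding expectation_def using br B kt by (simp add: kron_right_1x1)
  finally show ?thesis .
qed


abbreviation mat_span :: "nat \<Rightarrow> complex mat set \<Rightarrow> complex mat set" where
  "mat_span N S \<equiv> LinearCombinations.module.span class_ring (module_mat TYPE(complex) N N) S"

abbreviation mat_lin_dep :: "nat \<Rightarrow> complex mat set \<Rightarrow> bool" where
  "mat_lin_dep N S \<equiv> LinearCombinations.module.lin_dep class_ring (module_mat TYPE(complex) N N) S"

lemma mat_span_submodule:
  "S \<subseteq> carrier_mat N N \<Longrightarrow> submodule class_ring (mat_span N S) (module_mat TYPE(complex) N N)"
proof -
  interpret VS: vectorspace class_ring "module_mat TYPE(complex) N N" by (rule matrix_vs)
  show "S \<subseteq> carrier_mat N N \<Longrightarrow> ?thesis" by (intro VS.span_is_submodule) (simp add: module_mat_simps)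
qed

lemma mat_span_carrier: "S \<subseteq> carrier_mat N N \<Longrightarrow> mat_span N S \<subseteq> carrier_mat N N"
  using mat_span_submodule[of S N] by (simp add: submodule_def module_mat_simps)

lemma in_mat_span: "S \<subseteq> carrier_mat N N \<Longrightarrow> x \<in> S \<Longrightarrow> x \<in> mat_span N S"
proof -
  interpret VS: vectorspace class_ring "module_mat TYPE(complex) N N" by (rule matrix_vs)
  show "S \<subseteq> carrier_mat N N \<Longrightarrow> x \<in> S \<Longrightarrow> ?thesis"
    using VS.in_own_span[of S] by (auto simp: module_mat_simps)
qed

lemma smult_in_mat_span:
  "S \<subseteq> carrier_mat N N \<Longrightarrow> x \<in> mat_span N S \<Longrightarrow> a \<cdot>\<^sub>m x \<in> mat_span N S"
  using mat_span_submodule[of S N] by (simp add: submodule_def module_mat_simps)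

lemma mat_sum_in_mat_span:
  assumes S: "S \<subseteq> carrier_mat N N" and I: "finite I" and f: "\<And>x. x \<in> I \<Longrightarrow> f x \<in> mat_span N S"
  shows "mat_sum N N f I \<in> mat_span N S"
  using I f
proof (induct I rule: finite_induct)
  case empty
  then show ?case using mat_span_submodule[OF S]
    by (simp add: submodule_def subgroup_def module_mat_simps)
next
  case (insert x I)
  then have "f x \<in> carrier_mat N N" using mat_span_carrier[OF S] by auto
  then show ?case using insert mat_span_submodule[OF S]
    by (simp add: mat_sum_insert submodule_def module_mat_simps)
qed

lemma mat_span_subset:
  assumes "S \<subseteq> carrier_mat N N" "T \<subseteq> carrier_mat N N" "S \<subseteq> mat_span N T"
  shows "mat_span N S \<subseteq> mat_span N T"
proof -
  interpret VS: vectorspace class_ring "module_mat TYPE(complex) N N" by (rule matrix_vs)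
  show ?thesis using VS.span_is_subset[OF assms(3) mat_span_submodule[OF assms(2)]] .
qed

lemma span_dim_le_card:
  assumes S: "S \<subseteq> carrier_mat N N" "finite S" and T: "T \<subseteq> carrier_mat N N" "finite T"
    and ST: "S \<subseteq> mat_span N T"
  shows "span_dim N S \<le> card T"
proof -
  interpret VS: vectorspace class_ring "module_mat TYPE(complex) N N" by (rule matrix_vs)
  interpret WS: vectorspace class_ring "VS.vs (mat_span N S)"
    by (rule VS.subspace_is_vs, rule VS.span_is_subspace) (use S in \<open>simp add: module_mat_simps\<close>)
  interpret WT: vectorspace class_ring "VS.vs (mat_span N T)"
    by (rule VS.subspace_is_vs, rule VS.span_is_subspace) (use T in \<open>simp add: module_mat_simps\<close>)
  have in_sub: "LinearCombinations.module.span class_ring (VS.vs (mat_span N X)) A = mat_span N A"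
    if "X \<subseteq> carrier_mat N N" "A \<subseteq> mat_span N X" for X A
    using VS.span_li_not_depend[OF that(2) mat_span_submodule[OF that(1)]] by auto
  have SinS: "S \<subseteq> mat_span N S" using in_mat_span[OF S(1)] by auto
  have TinT: "T \<subseteq> mat_span N T" using in_mat_span[OF T(1)] by auto
  have "WS.fin_dim" unfolding WS.fin_dim_def
    using S SinS in_sub[OF S(1) SinS] by (intro exI[of _ S]) auto
  then obtain \<beta> where \<beta>: "finite \<beta>" "WS.basis \<beta>" using WS.finite_basis_exists by blast
  have \<beta>S: "\<beta> \<subseteq> mat_span N S" using \<beta>(2) unfolding WS.basis_def by simp
  have li: "\<not> VS.lin_dep \<beta>"
    using \<beta>(2) VS.span_li_not_depend(2)[OF \<beta>S mat_span_submodule[OF S(1)]] unfolding WS.basis_def by simp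
  have \<beta>T: "\<beta> \<subseteq> mat_span N T" using \<beta>S mat_span_subset[OF S(1) T(1) ST] by auto
  have "card \<beta> \<le> card T"
    by (rule WT.li_smaller_than_gen[OF \<beta>(1) T(2)])
      (use \<beta>T TinT li in_sub[OF T(1) TinT] VS.span_li_not_depend(2)[OF \<beta>T mat_span_submodule[OF T(1)]] in auto)
  moreover have "WS.dim = card \<beta>" by (rule WS.dim_basis[OF \<beta>])
  ultimately show ?thesis unfolding span_dim_def by simp
qed

lemma span_dim_eq_card:
  assumes T: "T \<subseteq> carrier_mat N N" "finite T" and li: "\<not> mat_lin_dep N T"
  shows "span_dim N T = card T"
proof -
  interpret VS: vectorspace class_ring "module_mat TYPE(complex) N N" by (rule matrix_vs)
  interpret WT: vectorspace class_ring "VS.vs (mat_span N T)"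
    by (rule VS.subspace_is_vs, rule VS.span_is_subspace) (use T in \<open>simp add: module_mat_simps\<close>)
  have TinT: "T \<subseteq> mat_span N T" using in_mat_span[OF T(1)] by auto
  have "WT.basis T" unfolding WT.basis_def
    using TinT li VS.span_li_not_depend[OF TinT mat_span_submodule[OF T(1)]] by auto
  then show ?thesis unfolding span_dim_def by (rule WT.dim_basis[OF T(2)])
qed

lemma lincomb_eq_mat_sum:
  assumes "finite A" "A \<subseteq> carrier_mat N N"
  shows "LinearCombinations.module.lincomb (module_mat TYPE(complex) N N) a A = mat_sum N N (\<lambda>v. a v \<cdot>\<^sub>m v) A"
  using assms
proof (induct A rule: finite_induct)
  case empty
  interpret VS: vectorspace class_ring "module_mat TYPE(complex) N N" by (rule matrix_vs)
  show ?case by (simp add: VS.lincomb_def module_mat_simps)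
next
  case (insert x F)
  interpret VS: vectorspace class_ring "module_mat TYPE(complex) N N" by (rule matrix_vs)
  have "VS.lincomb a (insert x F) = a x \<cdot>\<^sub>m x + VS.lincomb a F"
    unfolding VS.lincomb_def using insert by (subst VS.finsum_insert) (auto simp: module_mat_simps)
  then show ?case using insert by (simp add: mat_sum_insert)
qed

lemma not_mat_lin_dep_if_trace_dual:
  assumes T: "finite T" "T \<subseteq> carrier_mat N N"
    and g: "\<And>v. v \<in> T \<Longrightarrow> g v \<in> carrier_mat N N"
    and dual: "\<And>v w. v \<in> T \<Longrightarrow> w \<in> T \<Longrightarrow> trace (g w * v) = (if v = w then 1 else 0)"
  shows "\<not> mat_lin_dep N T"
proof
  interpret VS: vectorspace class_ring "module_mat TYPE(complex) N N" by (rule matrix_vs)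
  assume "VS.lin_dep T"
  then obtain A a v where A: "finite A" "A \<subseteq> T" and lc: "VS.lincomb a A = 0\<^sub>m N N"
    and v: "v \<in> A" and av: "a v \<noteq> 0"
    unfolding VS.lin_dep_def by (auto simp: module_mat_simps)
  have AC: "A \<subseteq> carrier_mat N N" using A T by auto
  have gv: "g v \<in> carrier_mat N N" using g v A by auto
  have "0 = trace (g v * VS.lincomb a A)" using lc gv by (simp add: trace_def)
  also have "\<dots> = trace (mat_sum N N (\<lambda>u. g v * (a u \<cdot>\<^sub>m u)) A)"
    using gv AC by (simp add: lincomb_eq_mat_sum[OF A(1) AC] mult_mat_sum_left[of _ N N] subset_iff)
  also have "\<dots> = (\<Sum>u\<in>A. a u * trace (g v * u))"
    using gv AC by (subst trace_mat_sum) (auto simp: mult_smult_distrib trace_smult[of _ N] intro!: sum.cong)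
  also have "\<dots> = (\<Sum>u\<in>A. if u = v then a u else 0)"
    using dual v A by (intro sum.cong refl) (auto simp: subset_iff)
  also have "\<dots> = a v" using A v by simp
  finally show False using av by simp
qed


section \<open>Entropy of a normalized scaled projection\<close>

lemma similar_mat_scaled_projection:
  fixes A B :: "'a::comm_ring_1 mat"
  assumes sim: "similar_mat A B" and sq: "A * A = c \<cdot>\<^sub>m A"
  shows "B * B = c \<cdot>\<^sub>m B"
proof -
  obtain P Q where wit: "similar_mat_wit B A Q P"
    using sim similar_mat_wit_sym unfolding similar_mat_def by blast
  note carr = similar_mat_witD[OF refl wit]
  have pow2: "X ^\<^sub>m 2 = X * X" if "X \<in> carrier_mat k k" for X :: "'a mat" and k
    unfolding numeral_2_eq_2 pow_mat.simps using that by simp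
  have "B * B = B ^\<^sub>m 2" using pow2[OF carr(4)] by simp
  also have "\<dots> = Q * A ^\<^sub>m 2 * P" by (rule similar_mat_wit_pow_id[OF wit])
  also have "\<dots> = Q * (c \<cdot>\<^sub>m A) * P" using pow2[OF carr(5)] sq by simp
  also have "\<dots> = c \<cdot>\<^sub>m B"
    using similar_mat_witD(3)[OF refl similar_mat_wit_smult[OF wit, of c]] by simp
  finally show ?thesis .
qed

lemma upper_triangular_scaled_projection_diag:
  assumes B: "B \<in> carrier_mat d d" and ut: "upper_triangular B" and sq: "B * B = c \<cdot>\<^sub>m B"
    and i: "i < d"
  shows "B $$ (i, i) = c \<or> B $$ (i, i) = (0::'a::idom)"
proof -
  have "(B * B) $$ (i, i) = (\<Sum>l<d. B $$ (i, l) * B $$ (l, i))" using mat_index_mult_sum[OF B B i i] .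
  also have "\<dots> = (\<Sum>l<d. if l = i then B $$ (i, i) * B $$ (i, i) else 0)"
    using ut i B unfolding upper_triangular_def
    by (intro sum.cong refl) (metis carrier_matD(1) lessThan_iff linorder_neqE_nat mult_zero_left mult_zero_right order.strict_trans)
  finally have "B $$ (i, i) * B $$ (i, i) = c * B $$ (i, i)" using sq B i by auto
  then show ?thesis by (metis mult_cancel_right mult_zero_left)
qed

lemma char_poly_scaled_projection:
  fixes A :: "complex mat"
  assumes A: "A \<in> carrier_mat d d" and sq: "A * A = c \<cdot>\<^sub>m A" and tr: "trace A = 1"
  obtains r z where "of_nat r * c = 1" "char_poly A = [:- c, 1:] ^ r * [:0, 1:] ^ z"
proof -
  obtain es where "char_poly A = (\<Prod>a\<leftarrow>es. [:- a, 1:])" using char_poly_factorized[OF A] by blast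
  from schur_decomposition_exists[OF A this] obtain B where B: "B \<in> carrier_mat d d"
    and ut: "upper_triangular B" and sim: "similar_mat A B" by blast
  have diag: "B $$ (i, i) = c \<or> B $$ (i, i) = 0" if "i < d" for i
    using upper_triangular_scaled_projection_diag[OF B ut similar_mat_scaled_projection[OF sim sq] that] .
  define I1 where "I1 = {i \<in> {0..<d}. B $$ (i, i) = c}"
  define I0 where "I0 = {i \<in> {0..<d}. B $$ (i, i) \<noteq> c}"
  have I01: "{0..<d} = I1 \<union> I0" "I1 \<inter> I0 = {}" "finite I1" "finite I0" unfolding I1_def I0_def by auto
  have I0z: "i \<in> I0 \<Longrightarrow> B $$ (i, i) = 0" for i using diag unfolding I0_def by auto
  have "1 = trace B" using tr trace_similar_mat[OF sim] by simp
  also have "\<dots> = (\<Sum>i\<in>I1 \<union> I0. B $$ (i, i))"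
    unfolding trace_def I01(1)[symmetric] using B by (simp add: atLeast0LessThan)
  also have "\<dots> = of_nat (card I1) * c" using I01 I0z by (simp add: sum.union_disjoint I1_def)
  finally have "of_nat (card I1) * c = 1" ..
  moreover have "char_poly A = [:- c, 1:] ^ card I1 * [:0, 1:] ^ card I0"
  proof -
    have "char_poly A = (\<Prod>i\<in>I1 \<union> I0. [:- B $$ (i, i), 1:])"
      unfolding char_poly_similar[OF sim] char_poly_upper_triangular[OF B ut] I01(1)[symmetric] using B
      by (simp add: diag_mat_def o_def prod.distinct_set_conv_list[symmetric] atLeast0LessThan)
    also have "\<dots> = [:- c, 1:] ^ card I1 * [:0, 1:] ^ card I0"
      using I01 I0z by (simp add: prod.union_disjoint I1_def)
    finally show ?thesis .
  qed
  ultimately show ?thesis using that by blast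
qed

lemma von_neumann_entropy_scaled_projection:
  assumes A: "A \<in> carrier_mat d d" and sq: "A * A = complex_of_real c \<cdot>\<^sub>m A" and tr: "trace A = 1"
  shows "von_neumann_entropy A = - log 2 c"
proof -
  obtain r z where rc: "of_nat r * complex_of_real c = 1"
    and cp: "char_poly A = [:- complex_of_real c, 1:] ^ r * [:0, 1:] ^ z"
    using char_poly_scaled_projection[OF A sq tr] .
  have rc': "real r * c = 1" using rc by (metis of_real_eq_1_iff of_real_mult of_real_of_nat_eq)
  then have "r > 0" "c \<noteq> 0" by (auto intro: gr0I)
  have roots: "{e. poly (char_poly A) e = 0} = {complex_of_real c, 0} \<or>
               {e. poly (char_poly A) e = 0} = {complex_of_real c}"
    using \<open>r > 0\<close> unfolding cp by (cases "z = 0") (auto simp: zero_power)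
  have "order (complex_of_real c) (char_poly A) = r"
    unfolding cp using \<open>c \<noteq> 0\<close> by (subst order_mult) (auto simp: order_power_n_n intro!: order_0I)
  then have "(\<Sum>e\<in>{e. poly (char_poly A) e = 0}. real (order e (char_poly A)) * (Re e * log 2 (Re e)))
           = real r * (c * log 2 c)"
    using roots \<open>c \<noteq> 0\<close> by auto
  also have "\<dots> = log 2 c" using rc' by (simp add: mult.assoc[symmetric])
  finally show ?thesis unfolding von_neumann_entropy_def by simp
qed


definition pauli1_entry :: "bool \<times> bool \<Rightarrow> nat \<Rightarrow> nat \<Rightarrow> complex" where
  "pauli1_entry p i j = (case p of
      (False, False) \<Rightarrow> (if i = j then 1 else 0)
    | (True, False)  \<Rightarrow> (if i = j then 0 else 1)
    | (False, True)  \<Rightarrow> (if i = j then (if i = 0 then 1 else -1) else 0)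
    | (True, True)   \<Rightarrow> (if i = j then 0 else if i = 0 then -\<i> else \<i>))"

lemma pauli1_eq_mat: "pauli1 p = mat 2 2 (\<lambda>(i, j). pauli1_entry p i j)"
proof -
  have less2: "(i::nat) < 2 \<longleftrightarrow> i = 0 \<or> i = 1" for i by auto
  show ?thesis
    by (rule eq_matI)
      (auto simp: pauli1_def pauli1_entry_def mat_of_rows_list_def less2 split: prod.splits bool.splits)
qed

lemma pauli1_carrier [simp]: "pauli1 p \<in> carrier_mat 2 2"
  by (simp add: pauli1_eq_mat)

definition sym_add1 :: "bool \<times> bool \<Rightarrow> bool \<times> bool \<Rightarrow> bool \<times> bool" where
  "sym_add1 p q = (fst p \<noteq> fst q, snd p \<noteq> snd q)"

definition pauli1_phase :: "bool \<times> bool \<Rightarrow> bool \<times> bool \<Rightarrow> complex" where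
  "pauli1_phase p q =
     (if p = (True, False) \<and> q = (True, True) then \<i>
      else if p = (True, False) \<and> q = (False, True) then -\<i>
      else if p = (True, True) \<and> q = (True, False) then -\<i>
      else if p = (True, True) \<and> q = (False, True) then \<i>
      else if p = (False, True) \<and> q = (True, False) then \<i>
      else if p = (False, True) \<and> q = (True, True) then -\<i> else 1)"

lemma pauli1_mult: "pauli1 p * pauli1 q = pauli1_phase p q \<cdot>\<^sub>m pauli1 (sym_add1 p q)"
proof -
  have mat2_eqI: "A = B" if "A \<in> carrier_mat 2 2" "B \<in> carrier_mat 2 2" "A $$ (0, 0) = B $$ (0, 0)"
    "A $$ (0, 1) = B $$ (0, 1)" "A $$ (1, 0) = B $$ (1, 0)" "A $$ (1, 1) = B $$ (1, 1)" for A B :: "complex mat"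
    using that by (intro eq_matI) (auto simp: less_2_cases_iff)
  obtain a b c d where "p = (a, b)" "q = (c, d)" by (cases p, cases q) auto
  then show ?thesis unfolding pauli1_eq_mat
    by (cases a; cases b; cases c; cases d)
      (auto intro!: mat2_eqI simp: scalar_prod_def numeral_2_eq_2 pauli1_entry_def pauli1_phase_def sym_add1_def)
qed

definition sym_add :: "(bool \<times> bool) list \<Rightarrow> (bool \<times> bool) list \<Rightarrow> (bool \<times> bool) list" where
  "sym_add l l' = map (\<lambda>(p, q). sym_add1 p q) (zip l l')"

fun pauli_phase :: "(bool \<times> bool) list \<Rightarrow> (bool \<times> bool) list \<Rightarrow> complex" where
  "pauli_phase (p # l) (q # l') = pauli1_phase p q * pauli_phase l l'"
| "pauli_phase _ _ = 1"

lemma sym_add_Cons [simp]: "sym_add (p # l) (q # l') = sym_add1 p q # sym_add l l'"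
  and sym_add_Nil [simp]: "sym_add [] l' = []"
  by (simp_all add: sym_add_def)

lemma length_sym_add [simp]: "length (sym_add l l') = min (length l) (length l')"
  by (simp add: sym_add_def)

lemma take_sym_add: "take n (sym_add l l') = sym_add (take n l) (take n l')"
  by (simp add: sym_add_def take_map take_zip)

lemma drop_sym_add: "drop n (sym_add l l') = sym_add (drop n l) (drop n l')"
  by (simp add: sym_add_def drop_map drop_zip)

lemma sym_add_self: "set (sym_add l l) \<subseteq> {(False, False)}"
  by (induct l) (auto simp: sym_add1_def)

lemma sym_add_trivial_iff:
  "length l = length l' \<Longrightarrow> set (sym_add l l') \<subseteq> {(False, False)} \<longleftrightarrow> l = l'"
proof (induct l arbitrary: l')
  case (Cons p l)
  then obtain q l2 where "l' = q # l2" "length l = length l2" by (cases l') auto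
  then show ?case using Cons(1) by (cases p; cases q) (auto simp: sym_add1_def)
qed simp

lemma trivial_label_eq:
  "length l = length l' \<Longrightarrow> set l \<subseteq> {(False, False)} \<Longrightarrow> set l' \<subseteq> {(False, False)} \<Longrightarrow> l = l'"
  by (metis replicate_eqI singletonD subsetD)

lemma sym_add_trivial_right:
  "length z = length l \<Longrightarrow> set z \<subseteq> {(False, False)} \<Longrightarrow> sym_add l z = l"
proof (induct l arbitrary: z)
  case (Cons p l)
  then obtain q z' where "z = q # z'" by (cases z) auto
  then show ?case using Cons by (auto simp: sym_add1_def)
qed simp

lemma pauli_phase_self [simp]: "pauli_phase l l = 1"
  by (induct l) (auto simp: pauli1_phase_def)

lemma pauli_phase_nonzero: "pauli_phase l l' \<noteq> 0"
  by (induct l l' rule: pauli_phase.induct) (auto simp: pauli1_phase_def)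

lemma pauli_mat_dims [simp]:
  "dim_row (pauli_mat l) = 2 ^ length l" "dim_col (pauli_mat l) = 2 ^ length l"
  by (induct l) (auto simp: pauli1_eq_mat)

lemma pauli_mat_carrier [simp]: "pauli_mat l \<in> carrier_mat (2 ^ length l) (2 ^ length l)"
  by (rule carrier_matI) simp_all

lemma pauli_mat_append: "pauli_mat (l @ l') = kron (pauli_mat l) (pauli_mat l')"
  by (induct l) (simp_all add: kron_assoc)

lemma pauli_mat_mult:
  "length l = length l' \<Longrightarrow> pauli_mat l * pauli_mat l' = pauli_phase l l' \<cdot>\<^sub>m pauli_mat (sym_add l l')"
proof (induct l arbitrary: l')
  case (Cons p l)
  then obtain q l2 where l': "l' = q # l2" and len: "length l = length l2" by (cases l') auto
  have "pauli_mat (p # l) * pauli_mat l' = kron (pauli1 p * pauli1 q) (pauli_mat l * pauli_mat l2)"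
  proof -
    have "pauli_mat l2 \<in> carrier_mat (2 ^ length l) (2 ^ length l)" using len by simp
    then show ?thesis unfolding l' using kron_mult[OF pauli1_carrier pauli_mat_carrier pauli1_carrier] by simp
  qed
  also have "\<dots> = pauli_phase (p # l) l' \<cdot>\<^sub>m pauli_mat (sym_add (p # l) l')"
    unfolding l' using Cons(1)[OF len]
    by (simp add: pauli1_mult kron_smult_left kron_smult_right smult_smult_mat mult.commute)
  finally show ?case .
qed simp

lemma pauli_mat_trivial: "set l \<subseteq> {(False, False)} \<Longrightarrow> pauli_mat l = 1\<^sub>m (2 ^ length l)"
proof (induct l)
  case (Cons p l)
  have "pauli1 (False, False) = 1\<^sub>m 2" by (rule eq_matI) (auto simp: pauli1_eq_mat pauli1_entry_def)
  then show ?case using Cons by (simp add: kron_one_mat)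
qed simp

lemma pauli_mat_square: "pauli_mat l * pauli_mat l = 1\<^sub>m (2 ^ length l)"
  by (simp add: pauli_mat_mult pauli_mat_trivial[OF sym_add_self])

lemma trace_pauli_mat:
  "trace (pauli_mat l) = (if set l \<subseteq> {(False, False)} then 2 ^ length l else 0)"
proof (induct l)
  case (Cons p l)
  have "trace (pauli1 p) = (if p = (False, False) then 2 else 0)"
    by (cases p) (auto simp: trace_def pauli1_eq_mat pauli1_entry_def numeral_2_eq_2 split: bool.splits)
  then show ?case by (simp add: trace_kron[OF pauli1_carrier pauli_mat_carrier] Cons)
qed (simp add: trace_def)

lemma trace_pauli_mat_mult:
  assumes "length l = length l'"
  shows "trace (pauli_mat l * pauli_mat l') = (if l = l' then 2 ^ length l else 0)"
proof (cases "l = l'")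
  case False
  then have "trace (pauli_mat (sym_add l l')) = 0" using assms by (simp add: trace_pauli_mat sym_add_trivial_iff)
  then show ?thesis using assms False by (simp add: pauli_mat_mult trace_smult[OF pauli_mat_carrier])
qed (simp add: pauli_mat_square)

lemma pauli_mat_inj: "length l = length l' \<Longrightarrow> pauli_mat l = pauli_mat l' \<Longrightarrow> l = l'"
  using trace_pauli_mat_mult[of l l'] trace_pauli_mat_mult[of l l] by (metis zero_neq_numeral power_not_zero)

lemma trace_square_pauli_sum:
  fixes a :: "'s \<Rightarrow> (bool \<times> bool) list" and e :: "'s \<Rightarrow> complex" and c :: complex
  assumes T: "finite T" and len: "\<And>S. S \<in> T \<Longrightarrow> length (a S) = L"
    and inj: "inj_on a T" and e: "\<And>S. S \<in> T \<Longrightarrow> e S * e S = 1"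
  defines "X \<equiv> mat_sum (2 ^ L) (2 ^ L) (\<lambda>S. (e S / c) \<cdot>\<^sub>m pauli_mat (a S)) T"
  shows "trace (X * X) = of_nat (card T) * 2 ^ L / (c * c)"
proof -
  let ?D = "(2::nat) ^ L"
  have pc: "\<And>S. S \<in> T \<Longrightarrow> pauli_mat (a S) \<in> carrier_mat ?D ?D" using len pauli_mat_carrier by metis
  have "X * X = mat_sum ?D ?D (\<lambda>S. ((e S / c) \<cdot>\<^sub>m pauli_mat (a S)) * X) T"
    unfolding X_def using pc by (intro mult_mat_sum_right) auto
  then have "trace (X * X) = (\<Sum>S\<in>T. trace (((e S / c) \<cdot>\<^sub>m pauli_mat (a S)) * X))"
    using pc by (simp add: trace_mat_sum X_def mult_carrier_mat[of _ ?D ?D _ ?D])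
  also have "\<dots> = (\<Sum>S\<in>T. \<Sum>S'\<in>T. (e S / c) * (e S' / c) * trace (pauli_mat (a S) * pauli_mat (a S')))"
  proof (intro sum.cong refl)
    fix S assume S: "S \<in> T"
    have "((e S / c) \<cdot>\<^sub>m pauli_mat (a S)) * X =
          mat_sum ?D ?D (\<lambda>S'. ((e S / c) * (e S' / c)) \<cdot>\<^sub>m (pauli_mat (a S) * pauli_mat (a S'))) T"
      unfolding X_def using pc S
      by (subst mult_mat_sum_left[of _ ?D ?D]) (auto intro!: mat_sum_cong
          simp: mult_smult_distrib[of _ ?D ?D _ ?D] mult_smult_assoc_mat[of _ ?D ?D _ ?D] smult_smult_mat mult.commute)
    then show "trace (((e S / c) \<cdot>\<^sub>m pauli_mat (a S)) * X) =
        (\<Sum>S'\<in>T. (e S / c) * (e S' / c) * trace (pauli_mat (a S) * pauli_mat (a S')))"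
      using pc S by (simp add: trace_mat_sum trace_smult[of _ ?D] mult_carrier_mat[of _ ?D ?D _ ?D])
  qed
  also have "\<dots> = (\<Sum>S\<in>T. \<Sum>S'\<in>T. if S' = S then 2 ^ L / (c * c) else 0)"
  proof (intro sum.cong refl)
    fix S S' assume S: "S \<in> T" and S': "S' \<in> T"
    have "a S = a S' \<longleftrightarrow> S' = S" using inj S S' by (auto dest: inj_onD)
    then show "(e S / c) * (e S' / c) * trace (pauli_mat (a S) * pauli_mat (a S')) =
        (if S' = S then 2 ^ L / (c * c) else 0)"
      using e[OF S] len[OF S] len[OF S'] by (simp add: trace_pauli_mat_mult)
  qed
  also have "\<dots> = of_nat (card T) * 2 ^ L / (c * c)" using T by simp
  finally show ?thesis .
qed

lemma not_mat_lin_dep_pauli_mat: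
  assumes L: "finite L" and len: "\<And>l. l \<in> L \<Longrightarrow> length l = n"
  shows "\<not> mat_lin_dep (2 ^ n) (pauli_mat ` L)"
proof (rule not_mat_lin_dep_if_trace_dual[where g = "\<lambda>v. (1 / 2 ^ n) \<cdot>\<^sub>m v"])
  show "pauli_mat ` L \<subseteq> carrier_mat (2 ^ n) (2 ^ n)" using len pauli_mat_carrier by fastforce
  then show "\<And>v. v \<in> pauli_mat ` L \<Longrightarrow> (1 / 2 ^ n) \<cdot>\<^sub>m v \<in> carrier_mat (2 ^ n) (2 ^ n)" by auto
  fix v w assume "v \<in> pauli_mat ` L" "w \<in> pauli_mat ` L"
  then obtain l l' where l: "l \<in> L" "v = pauli_mat l" and l': "l' \<in> L" "w = pauli_mat l'" by auto
  have carr: "pauli_mat l \<in> carrier_mat (2 ^ n) (2 ^ n)" "pauli_mat l' \<in> carrier_mat (2 ^ n) (2 ^ n)"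
    using l(1) l'(1) len pauli_mat_carrier by metis+
  have "trace ((1 / 2 ^ n) \<cdot>\<^sub>m w * v) = (1 / 2 ^ n) * trace (pauli_mat l' * pauli_mat l)"
    unfolding l(2) l'(2) using carr by (simp add: mult_smult_assoc_mat[of _ "2 ^ n" "2 ^ n" _ "2 ^ n"] trace_smult[of _ "2 ^ n"])
  also have "\<dots> = (if l' = l then 1 else 0)" using trace_pauli_mat_mult[of l' l] l(1) l'(1) len by simp
  also have "(l' = l) = (v = w)" using l l' len pauli_mat_inj by metis
  finally show "trace ((1 / 2 ^ n) \<cdot>\<^sub>m w * v) = (if v = w then 1 else 0)" .
qed (use L in simp)


section \<open>The stabilizer group of a stabilizer basis\<close>

lemma odd_card_sym_diff:
  assumes "finite X" "finite Y"
  shows "odd (card (sym_diff X Y)) \<longleftrightarrow> odd (card X) \<noteq> odd (card Y)"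
proof -
  have "card (sym_diff X Y) = card (X - Y) + card (Y - X)"
    using assms by (intro card_Un_disjoint) auto
  moreover have "card X = card (X \<inter> Y) + card (X - Y)" "card Y = card (Y \<inter> X) + card (Y - X)"
    using assms by (simp_all add: card_Int_Diff)
  moreover have "Y \<inter> X = X \<inter> Y" by blast
  ultimately show ?thesis by presburger
qed

locale stabilizer_group =
  fixes k :: nat and \<Phi> :: "nat \<Rightarrow> complex vec" and P :: "nat \<Rightarrow> (bool \<times> bool) list"
  assumes basis_carrier: "\<And>b. b < 2 ^ k \<Longrightarrow> \<Phi> b \<in> carrier_vec (2 ^ k)"
    and basis_orthonormal:
      "\<And>b b'. b < 2 ^ k \<Longrightarrow> b' < 2 ^ k \<Longrightarrow> \<Phi> b \<bullet>c \<Phi> b' = (if b = b' then 1 else 0)"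
    and generator_length: "\<And>j. j < k \<Longrightarrow> length (P j) = k"
    and generators_commute: "\<And>i j. i < k \<Longrightarrow> j < k \<Longrightarrow>
      pauli_mat (P i) * pauli_mat (P j) = pauli_mat (P j) * pauli_mat (P i)"
    and generators_independent: "pauli_independent k k P"
    and basis_eigenvector: "\<And>b j. b < 2 ^ k \<Longrightarrow> j < k \<Longrightarrow> \<exists>ev. eigenvector (pauli_mat (P j)) (\<Phi> b) ev"

lemma stabilizer_basis_imp_stabilizer_group:
  "stabilizer_basis k \<Phi> \<Longrightarrow> \<exists>P. stabilizer_group k \<Phi> P"
  unfolding stabilizer_basis_def stabilizer_group_def by (elim conjE exE) (rule exI, auto)

context stabilizer_group
begin

abbreviation K :: nat where "K \<equiv> 2 ^ k"

definition gen :: "nat \<Rightarrow> complex mat" where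
  "gen j = pauli_mat (P j)"

definition eigval :: "nat \<Rightarrow> nat \<Rightarrow> complex" where
  "eigval b j = (SOME ev. eigenvector (gen j) (\<Phi> b) ev)"

definition eigval_prod :: "nat \<Rightarrow> nat set \<Rightarrow> complex" where
  "eigval_prod b S = (\<Prod>j\<in>S. eigval b j)"

text \<open>The stabilizer group is indexed by the subsets \<open>S\<close> of \<open>{..<k}\<close>: \<open>stab_elem S\<close> is the
  ordered product of the generators in \<open>S\<close>.\<close>

primrec gen_prod :: "nat set \<Rightarrow> nat \<Rightarrow> complex mat" where
  "gen_prod S 0 = 1\<^sub>m K"
| "gen_prod S (Suc j) = (if j \<in> S then gen j * gen_prod S j else gen_prod S j)"

abbreviation stab_elem :: "nat set \<Rightarrow> complex mat" where
  "stab_elem S \<equiv> gen_prod S k"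

definition label :: "nat set \<Rightarrow> (bool \<times> bool) list" where
  "label S = map (\<lambda>i. (odd (card {l \<in> S. fst (P l ! i)}), odd (card {l \<in> S. snd (P l ! i)}))) [0..<k]"

definition proj :: "nat \<Rightarrow> complex mat" where
  "proj b = ket (\<Phi> b) * bra (\<Phi> b)"

lemma gen_carrier [simp]: "j < k \<Longrightarrow> gen j \<in> carrier_mat K K"
  and pauli_mat_generator_carrier [simp]: "j < k \<Longrightarrow> pauli_mat (P j) \<in> carrier_mat K K"
  and pauli_mat_label_carrier [simp]: "pauli_mat (label S) \<in> carrier_mat K K"
  unfolding gen_def using pauli_mat_carrier[of "P j"] pauli_mat_carrier[of "label S"] generator_length[of j]
  by (simp_all add: label_def)

lemma gen_square: "j < k \<Longrightarrow> gen j * gen j = 1\<^sub>m K"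
  unfolding gen_def using pauli_mat_square[of "P j"] generator_length[of j] by simp

lemma basis_dim [simp]: "b < K \<Longrightarrow> dim_vec (\<Phi> b) = K"
  by (rule carrier_vecD[OF basis_carrier])

lemma basis_nonzero: "b < K \<Longrightarrow> \<Phi> b \<noteq> 0\<^sub>v K"
  using basis_orthonormal[of b b] by auto

lemma eigenvector_eigval: "b < K \<Longrightarrow> j < k \<Longrightarrow> eigenvector (gen j) (\<Phi> b) (eigval b j)"
  unfolding eigval_def gen_def using basis_eigenvector by (rule someI_ex)

lemma gen_mult_basis: "b < K \<Longrightarrow> j < k \<Longrightarrow> gen j *\<^sub>v \<Phi> b = eigval b j \<cdot>\<^sub>v \<Phi> b"
  using eigenvector_eigval unfolding eigenvector_def by blast

lemma eigval_square: assumes b: "b < K" and j: "j < k" shows "eigval b j * eigval b j = 1"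
proof -
  have "(gen j * gen j) *\<^sub>v \<Phi> b = gen j *\<^sub>v (gen j *\<^sub>v \<Phi> b)"
    by (rule assoc_mult_mat_vec[of _ K K _ K]) (use b j basis_carrier in auto)
  also have "\<dots> = (eigval b j * eigval b j) \<cdot>\<^sub>v \<Phi> b"
    using b j basis_carrier by (simp add: gen_mult_basis mult_mat_vec[of _ K K] smult_smult_assoc)
  finally have "(eigval b j * eigval b j) \<cdot>\<^sub>v \<Phi> b = \<Phi> b"
    using gen_square[OF j] basis_carrier[OF b] by simp
  then show ?thesis using smult_vec_eq_self_imp_one[OF basis_carrier[OF b] basis_nonzero[OF b]] by blast
qed

lemma eigval_cases: "b < K \<Longrightarrow> j < k \<Longrightarrow> eigval b j = 1 \<or> eigval b j = -1"
  using eigval_square by (metis power2_eq_1_iff power2_eq_square)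

lemma eigval_prod_square: "b < K \<Longrightarrow> S \<subseteq> {..<k} \<Longrightarrow> eigval_prod b S * eigval_prod b S = 1"
  unfolding eigval_prod_def by (simp add: prod.distrib[symmetric] eigval_square subset_iff)

lemma eigval_prod_sym_diff:
  assumes b: "b < K" and S: "S \<subseteq> {..<k}" and T: "T \<subseteq> {..<k}"
  shows "eigval_prod b (sym_diff S T) = eigval_prod b S * eigval_prod b T"
proof -
  have fin: "finite S" "finite T" using S T finite_subset by auto
  have "eigval_prod b S = eigval_prod b (S \<inter> T) * eigval_prod b (S - T)"
    "eigval_prod b T = eigval_prod b (T \<inter> S) * eigval_prod b (T - S)"
    "eigval_prod b (sym_diff S T) = eigval_prod b (S - T) * eigval_prod b (T - S)"
    unfolding eigval_prod_def using fin by (auto intro: prod.Int_Diff prod.union_disjoint)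
  moreover have "T \<inter> S = S \<inter> T" by blast
  moreover have "eigval_prod b (S \<inter> T) * eigval_prod b (S \<inter> T) = 1"
    using S by (intro eigval_prod_square[OF b]) auto
  ultimately show ?thesis by (simp add: algebra_simps)
qed

lemma gen_prod_carrier [simp]: "j \<le> k \<Longrightarrow> gen_prod S j \<in> carrier_mat K K"
  by (induct j) (auto intro!: mult_carrier_mat[of _ K K])

lemma gen_prod_dims [simp]: "j \<le> k \<Longrightarrow> dim_row (gen_prod S j) = K" "j \<le> k \<Longrightarrow> dim_col (gen_prod S j) = K"
  by (metis carrier_matD gen_prod_carrier)+

lemma gen_prod_empty: "gen_prod {} j = 1\<^sub>m K"
  by (induct j) auto

lemma gen_prod_mult_basis:
  "b < K \<Longrightarrow> j \<le> k \<Longrightarrow> gen_prod S j *\<^sub>v \<Phi> b = eigval_prod b (S \<inter> {..<j}) \<cdot>\<^sub>v \<Phi> b"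
proof (induct j)
  case (Suc j)
  then have IH: "gen_prod S j *\<^sub>v \<Phi> b = eigval_prod b (S \<inter> {..<j}) \<cdot>\<^sub>v \<Phi> b" and j: "j < k" by auto
  show ?case
  proof (cases "j \<in> S")
    case True
    have "gen_prod S (Suc j) *\<^sub>v \<Phi> b = gen j *\<^sub>v (gen_prod S j *\<^sub>v \<Phi> b)"
      using True Suc j basis_carrier by (simp add: assoc_mult_mat_vec[of _ K K _ K])
    also have "\<dots> = (eigval b j * eigval_prod b (S \<inter> {..<j})) \<cdot>\<^sub>v \<Phi> b"
      unfolding IH using Suc j basis_carrier
      by (simp add: mult_mat_vec[of _ K K] gen_mult_basis smult_smult_assoc mult.commute)
    also have "S \<inter> {..<Suc j} = insert j (S \<inter> {..<j})" using True by auto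
    then have "eigval b j * eigval_prod b (S \<inter> {..<j}) = eigval_prod b (S \<inter> {..<Suc j})"
      unfolding eigval_prod_def by simp
    finally show ?thesis .
  next
    case False
    then have "S \<inter> {..<Suc j} = S \<inter> {..<j}" by (auto simp: less_Suc_eq)
    then show ?thesis using False IH by simp
  qed
qed (simp add: eigval_prod_def one_mult_mat_vec[OF basis_carrier])

lemma gen_commute_gen_prod: "i < k \<Longrightarrow> j \<le> k \<Longrightarrow> gen i * gen_prod S j = gen_prod S j * gen i"
proof (induct j)
  case (Suc j)
  then have IH: "gen i * gen_prod S j = gen_prod S j * gen i" and j: "j < k" by auto
  have "gen i * (gen j * gen_prod S j) = (gen j * gen_prod S j) * gen i"
  proof -
    have "gen i * (gen j * gen_prod S j) = (gen i * gen j) * gen_prod S j"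
      using Suc j by (simp add: assoc_mult_mat[of _ K K _ K _ K])
    also have "\<dots> = gen j * (gen i * gen_prod S j)"
      using Suc j generators_commute[of i j] by (simp add: gen_def[symmetric] assoc_mult_mat[of _ K K _ K _ K])
    also have "\<dots> = (gen j * gen_prod S j) * gen i"
      unfolding IH using Suc j by (simp add: assoc_mult_mat[of _ K K _ K _ K])
    finally show ?thesis .
  qed
  then show ?case using IH by simp
qed (simp add: left_mult_one_mat[of _ K K] right_mult_one_mat[of _ K K])

lemma gen_prod_mult: "j \<le> k \<Longrightarrow> gen_prod S j * gen_prod T j = gen_prod (sym_diff S T) j"
proof (induct j)
  case (Suc j)
  then have IH: "gen_prod S j * gen_prod T j = gen_prod (sym_diff S T) j" and j: "j < k" "j \<le> k" by auto
  have c: "\<And>X. gen_prod X j \<in> carrier_mat K K" "gen j \<in> carrier_mat K K" using j by auto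
  have swap: "gen_prod X j * (gen j * Y) = gen j * (gen_prod X j * Y)" if "Y \<in> carrier_mat K K" for X Y
  proof -
    have "gen_prod X j * (gen j * Y) = (gen_prod X j * gen j) * Y"
      using c that by (simp add: assoc_mult_mat[of _ K K _ K _ K])
    also have "\<dots> = (gen j * gen_prod X j) * Y" using gen_commute_gen_prod[OF j(1) j(2)] by simp
    also have "\<dots> = gen j * (gen_prod X j * Y)" using c that by (simp add: assoc_mult_mat[of _ K K _ K _ K])
    finally show ?thesis .
  qed
  consider "j \<in> S" "j \<in> T" | "j \<in> S" "j \<notin> T" | "j \<notin> S" "j \<in> T" | "j \<notin> S" "j \<notin> T" by blast
  then show ?case
  proof cases
    case 1
    have "gen_prod S (Suc j) * gen_prod T (Suc j) = gen j * (gen j * (gen_prod S j * gen_prod T j))"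
      using 1 c by (simp add: assoc_mult_mat[of _ K K _ K _ K] swap)
    also have "\<dots> = gen_prod (sym_diff S T) j"
      using c j by (simp add: assoc_mult_mat[of _ K K _ K _ K, symmetric] gen_square IH left_mult_one_mat[of _ K K])
    finally show ?thesis using 1 by simp
  next
    case 2
    then show ?thesis using c IH by (simp add: assoc_mult_mat[of _ K K _ K _ K])
  next
    case 3
    then show ?thesis using c IH by (simp add: assoc_mult_mat[of _ K K _ K _ K] swap)
  qed (simp add: IH)
qed simp

lemma length_label [simp]: "length (label S) = k"
  by (simp add: label_def)

lemma label_nth:
  "i < k \<Longrightarrow> label S ! i = (odd (card {l \<in> S. fst (P l ! i)}), odd (card {l \<in> S. snd (P l ! i)}))"
  by (simp add: label_def)

lemma label_empty: "set (label {}) \<subseteq> {(False, False)}"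
  by (auto simp: label_def)

lemma label_sym_diff:
  assumes fin: "finite S" "finite T"
  shows "label (sym_diff S T) = sym_add (label S) (label T)"
proof (rule nth_equalityI)
  fix i assume "i < length (label (sym_diff S T))"
  then have i: "i < k" by simp
  have filter: "{l \<in> sym_diff S T. Q l} = sym_diff {l \<in> S. Q l} {l \<in> T. Q l}" for Q by auto
  have finite: "finite {l \<in> S. Q l}" "finite {l \<in> T. Q l}" for Q using fin by auto
  have "label (sym_diff S T) ! i =
      (odd (card {l \<in> S. fst (P l ! i)}) \<noteq> odd (card {l \<in> T. fst (P l ! i)}),
       odd (card {l \<in> S. snd (P l ! i)}) \<noteq> odd (card {l \<in> T. snd (P l ! i)}))"
    using i by (simp only: label_nth filter odd_card_sym_diff[OF finite])
  then show "label (sym_diff S T) ! i = sym_add (label S) (label T) ! i"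
    using i by (simp add: label_nth sym_add_def sym_add1_def)
qed simp

lemma label_singleton: "j < k \<Longrightarrow> label {j} = P j"
proof (rule nth_equalityI)
  fix i assume "j < k" "i < length (label {j})"
  moreover have "{l \<in> {j}. Q l} = (if Q j then {j} else {})" for Q by auto
  ultimately show "label {j} ! i = P j ! i" by (cases "P j ! i") (simp add: label_nth generator_length)
qed (simp add: generator_length)

lemma label_trivial_imp_empty:
  assumes S: "S \<subseteq> {..<k}" and triv: "set (label S) \<subseteq> {(False, False)}"
  shows "S = {}"
proof (rule ccontr)
  assume "S \<noteq> {}"
  with generators_independent S obtain i where i: "i < k"
    and "odd (card {j \<in> S. fst (P j ! i)}) \<or> odd (card {j \<in> S. snd (P j ! i)})"
    unfolding pauli_independent_def by blast
  moreover have "label S ! i = (False, False)" using triv i by (metis length_label nth_mem singletonD subsetD)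
  ultimately show False by (simp add: label_nth)
qed

lemma label_inj:
  assumes S: "S \<subseteq> {..<k}" and T: "T \<subseteq> {..<k}" and eq: "label S = label T"
  shows "S = T"
proof -
  have "finite S" "finite T" using S T finite_subset by auto
  then have "set (label (sym_diff S T)) \<subseteq> {(False, False)}"
    using sym_add_self[of "label T"] by (simp only: label_sym_diff eq)
  then have "sym_diff S T = {}" using S T by (intro label_trivial_imp_empty) auto
  then show ?thesis by blast
qed

lemma gen_prod_eq_pauli_mat:
  "j \<le> k \<Longrightarrow> \<exists>\<omega>. \<omega> \<noteq> 0 \<and> gen_prod S j = \<omega> \<cdot>\<^sub>m pauli_mat (label (S \<inter> {..<j}))"
proof (induct j)
  case 0
  then show ?case by (intro exI[of _ 1]) (simp add: pauli_mat_trivial label_empty)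
next
  case (Suc j)
  then obtain \<omega> where \<omega>: "\<omega> \<noteq> 0" "gen_prod S j = \<omega> \<cdot>\<^sub>m pauli_mat (label (S \<inter> {..<j}))" and j: "j < k"
    by auto
  show ?case
  proof (cases "j \<in> S")
    case True
    let ?\<omega>' = "\<omega> * pauli_phase (P j) (label (S \<inter> {..<j}))"
    have "gen_prod S (Suc j) = \<omega> \<cdot>\<^sub>m (pauli_mat (P j) * pauli_mat (label (S \<inter> {..<j})))"
      using True \<omega> j by (simp add: gen_def mult_smult_distrib[of _ K K _ K])
    also have "\<dots> = ?\<omega>' \<cdot>\<^sub>m pauli_mat (sym_add (label {j}) (label (S \<inter> {..<j})))"
      using j generator_length[OF j] by (simp add: pauli_mat_mult label_singleton smult_smult_mat)
    also have "sym_add (label {j}) (label (S \<inter> {..<j})) = label (sym_diff {j} (S \<inter> {..<j}))"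
      using label_sym_diff[of "{j}" "S \<inter> {..<j}"] by simp
    also have "sym_diff {j} (S \<inter> {..<j}) = S \<inter> {..<Suc j}" using True by auto
    finally show ?thesis using \<omega>(1) pauli_phase_nonzero by (intro exI[of _ ?\<omega>']) simp
  next
    case False
    then have "S \<inter> {..<Suc j} = S \<inter> {..<j}" by (auto simp: less_Suc_eq)
    then show ?thesis using False \<omega> by (intro exI[of _ \<omega>]) simp
  qed
qed

definition elem_phase :: "nat set \<Rightarrow> complex" where
  "elem_phase S = (SOME \<omega>. \<omega> \<noteq> 0 \<and> stab_elem S = \<omega> \<cdot>\<^sub>m pauli_mat (label S))"

lemma elem_phase:
  assumes "S \<subseteq> {..<k}"
  shows "elem_phase S \<noteq> 0" "stab_elem S = elem_phase S \<cdot>\<^sub>m pauli_mat (label S)"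
proof -
  have "\<exists>\<omega>. \<omega> \<noteq> 0 \<and> stab_elem S = \<omega> \<cdot>\<^sub>m pauli_mat (label S)"
    using gen_prod_eq_pauli_mat[of k S] assms by (simp add: Int_absorb2)
  then have "elem_phase S \<noteq> 0 \<and> stab_elem S = elem_phase S \<cdot>\<^sub>m pauli_mat (label S)"
    unfolding elem_phase_def by (rule someI_ex)
  then show "elem_phase S \<noteq> 0" "stab_elem S = elem_phase S \<cdot>\<^sub>m pauli_mat (label S)" by auto
qed

lemma elem_phase_square: assumes S: "S \<subseteq> {..<k}" shows "elem_phase S * elem_phase S = 1"
proof -
  have "1\<^sub>m K = stab_elem S * stab_elem S" using gen_prod_mult[of k S S] by (simp add: gen_prod_empty)
  also have "\<dots> = (elem_phase S * elem_phase S) \<cdot>\<^sub>m 1\<^sub>m K"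
    unfolding elem_phase(2)[OF S] using pauli_mat_carrier[of "label S"]
    by (simp add: mult_smult_distrib[of _ K K _ K] mult_smult_assoc_mat[of _ K K _ K] smult_smult_mat pauli_mat_square)
  finally have "(1\<^sub>m K :: complex mat) $$ (0, 0) = ((elem_phase S * elem_phase S) \<cdot>\<^sub>m 1\<^sub>m K) $$ (0, 0)" by simp
  then show ?thesis by simp
qed

lemma trace_stab_elem:
  assumes S: "S \<subseteq> {..<k}"
  shows "trace (stab_elem S) = (if S = {} then of_nat K else 0)"
proof (cases "S = {}")
  case False
  then have "\<not> set (label S) \<subseteq> {(False, False)}" using label_trivial_imp_empty[OF S] by blast
  then have "trace (pauli_mat (label S)) = 0" by (simp add: trace_pauli_mat)
  then show ?thesis unfolding elem_phase(2)[OF S] using False by (simp add: trace_smult[OF pauli_mat_carrier])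
qed (simp add: gen_prod_empty)

lemma proj_carrier [simp]: "b < K \<Longrightarrow> proj b \<in> carrier_mat K K"
  unfolding proj_def using ket_bra_carrier[of "\<Phi> b"] by simp

lemma proj_dims [simp]: "b < K \<Longrightarrow> dim_row (proj b) = K" "b < K \<Longrightarrow> dim_col (proj b) = K"
  by (metis carrier_matD proj_carrier)+

lemma proj_index:
  "b < K \<Longrightarrow> i < K \<Longrightarrow> j < K \<Longrightarrow> proj b $$ (i, j) = \<Phi> b $ i * cnj (\<Phi> b $ j)"
  unfolding proj_def ket_mult_bra by simp

lemma trace_proj: "b < K \<Longrightarrow> trace (proj b) = 1"
  unfolding proj_def trace_ket_bra using basis_orthonormal[of b b] by simp

lemma basis_completeness:
  assumes i: "i < K" and j: "j < K"
  shows "(\<Sum>b<K. \<Phi> b $ i * cnj (\<Phi> b $ j)) = (if i = j then 1 else 0)"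
proof -
  define U where "U = mat K K (\<lambda>(i, b). \<Phi> b $ i)"
  define U' where "U' = mat K K (\<lambda>(b, i). cnj (\<Phi> b $ i))"
  have U: "U \<in> carrier_mat K K" and U': "U' \<in> carrier_mat K K" unfolding U_def U'_def by auto
  have "U' * U = 1\<^sub>m K"
  proof (rule eq_matI)
    fix b b' assume "b < dim_row (1\<^sub>m K)" "b' < dim_col (1\<^sub>m K)"
    then have bb: "b < K" "b' < K" by auto
    have "(U' * U) $$ (b, b') = \<Phi> b' \<bullet>c \<Phi> b"
      using bb unfolding U_def U'_def by (simp add: scalar_prod_def atLeast0LessThan mult.commute)
    then show "(U' * U) $$ (b, b') = 1\<^sub>m K $$ (b, b')" using basis_orthonormal[OF bb(2,1)] bb by auto
  qed (use U U' in auto)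
  then have "U * U' = 1\<^sub>m K" using mat_mult_left_right_inverse[OF U' U] by simp
  moreover have "(U * U') $$ (i, j) = (\<Sum>b<K. \<Phi> b $ i * cnj (\<Phi> b $ j))"
    using i j unfolding U_def U'_def by (simp add: scalar_prod_def atLeast0LessThan)
  ultimately show ?thesis using i j by simp
qed

lemma mat_index_eq_sum_basis:
  assumes X: "X \<in> carrier_mat K K" and i: "i < K" and j: "j < K"
  shows "X $$ (i, j) = (\<Sum>b<K. (X *\<^sub>v \<Phi> b) $ i * cnj (\<Phi> b $ j))"
proof -
  have "(\<Sum>b<K. (X *\<^sub>v \<Phi> b) $ i * cnj (\<Phi> b $ j)) = (\<Sum>b<K. \<Sum>l<K. X $$ (i, l) * (\<Phi> b $ l * cnj (\<Phi> b $ j)))"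
    using X i by (simp add: scalar_prod_def atLeast0LessThan sum_distrib_right mult.assoc)
  also have "\<dots> = (\<Sum>l<K. X $$ (i, l) * (\<Sum>b<K. \<Phi> b $ l * cnj (\<Phi> b $ j)))"
    by (subst sum.swap) (simp add: sum_distrib_left)
  also have "\<dots> = X $$ (i, j)" using j by (simp add: basis_completeness if_distrib cong: if_cong)
  finally show ?thesis by simp
qed

lemma stab_elem_spectral:
  assumes S: "S \<subseteq> {..<k}"
  shows "stab_elem S = mat_sum K K (\<lambda>b. eigval_prod b S \<cdot>\<^sub>m proj b) {..<K}"
proof (rule eq_matI)
  fix i j assume "i < dim_row (mat_sum K K (\<lambda>b. eigval_prod b S \<cdot>\<^sub>m proj b) {..<K})"
    "j < dim_col (mat_sum K K (\<lambda>b. eigval_prod b S \<cdot>\<^sub>m proj b) {..<K})"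
  then have ij: "i < K" "j < K" by auto
  have "stab_elem S $$ (i, j) = (\<Sum>b<K. (stab_elem S *\<^sub>v \<Phi> b) $ i * cnj (\<Phi> b $ j))"
    using ij by (intro mat_index_eq_sum_basis) auto
  also have "\<dots> = (\<Sum>b<K. (eigval_prod b S \<cdot>\<^sub>m proj b) $$ (i, j))"
    using ij S basis_carrier by (intro sum.cong refl) (simp add: gen_prod_mult_basis Int_absorb2 proj_index)
  finally show "stab_elem S $$ (i, j) = mat_sum K K (\<lambda>b. eigval_prod b S \<cdot>\<^sub>m proj b) {..<K} $$ (i, j)"
    using ij by simp
qed auto

lemma sum_eigval_prod_mult:
  assumes b: "b < K" "b' < K"
  shows "(\<Sum>S\<in>Pow {..<k}. eigval_prod b S * eigval_prod b' S) =
         (if \<forall>j<k. eigval b j = eigval b' j then of_nat K else 0)"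
proof -
  have "(\<Sum>S\<in>Pow {..<k}. eigval_prod b S * eigval_prod b' S) =
        (\<Sum>S\<in>Pow {..<k}. (\<Prod>j\<in>S. eigval b j * eigval b' j) * (\<Prod>j\<in>{..<k} - S. 1))"
    unfolding eigval_prod_def by (simp add: prod.distrib)
  also have "\<dots> = (\<Prod>j<k. eigval b j * eigval b' j + 1)" by (rule prod_add[symmetric]) simp
  also have "\<dots> = (\<Prod>j<k. if eigval b j = eigval b' j then 2 else 0)"
    using eigval_cases[OF b(1)] eigval_cases[OF b(2)] by (intro prod.cong refl) force
  also have "\<dots> = (if \<forall>j<k. eigval b j = eigval b' j then of_nat K else 0)"
    by (auto simp: prod_zero_iff)
  finally show ?thesis .
qed

lemma mat_sum_eigval_prod_stab_elem:
  assumes b: "b < K"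
  shows "mat_sum K K (\<lambda>S. eigval_prod b S \<cdot>\<^sub>m stab_elem S) (Pow {..<k}) =
         mat_sum K K (\<lambda>b'. (if \<forall>j<k. eigval b j = eigval b' j then of_nat K else 0) \<cdot>\<^sub>m proj b') {..<K}"
proof (rule eq_matI)
  fix i j assume "i < dim_row (mat_sum K K (\<lambda>b'. (if \<forall>j<k. eigval b j = eigval b' j then of_nat K else 0) \<cdot>\<^sub>m proj b') {..<K})"
    "j < dim_col (mat_sum K K (\<lambda>b'. (if \<forall>j<k. eigval b j = eigval b' j then of_nat K else 0) \<cdot>\<^sub>m proj b') {..<K})"
  then have ij: "i < K" "j < K" by auto
  have "mat_sum K K (\<lambda>S. eigval_prod b S \<cdot>\<^sub>m stab_elem S) (Pow {..<k}) $$ (i, j)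
      = (\<Sum>S\<in>Pow {..<k}. eigval_prod b S * (\<Sum>b'<K. eigval_prod b' S * proj b' $$ (i, j)))"
    using ij by (auto simp: stab_elem_spectral intro!: sum.cong)
  also have "\<dots> = (\<Sum>b'<K. (\<Sum>S\<in>Pow {..<k}. eigval_prod b S * eigval_prod b' S) * proj b' $$ (i, j))"
    by (simp add: sum_distrib_left sum_distrib_right sum.swap[of _ "Pow {..<k}"] mult.assoc)
  also have "\<dots> = mat_sum K K (\<lambda>b'. (if \<forall>j<k. eigval b j = eigval b' j then of_nat K else 0) \<cdot>\<^sub>m proj b') {..<K} $$ (i, j)"
    using ij b by (auto simp: sum_eigval_prod_mult intro!: sum.cong)
  finally show "mat_sum K K (\<lambda>S. eigval_prod b S \<cdot>\<^sub>m stab_elem S) (Pow {..<k}) $$ (i, j) =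
      mat_sum K K (\<lambda>b'. (if \<forall>j<k. eigval b j = eigval b' j then of_nat K else 0) \<cdot>\<^sub>m proj b') {..<K} $$ (i, j)" .
qed auto

text \<open>Distinct basis vectors have distinct eigenvalue signatures: taking traces above, only
  \<open>S = {}\<close> contributes on the left, so exactly one \<open>b'\<close> contributes on the right.\<close>

lemma eigval_signature_inj:
  assumes b: "b < K" "b' < K" and eq: "\<forall>j<k. eigval b j = eigval b' j"
  shows "b' = b"
proof (rule ccontr)
  assume ne: "b' \<noteq> b"
  define c where "c b'' = (if \<forall>j<k. eigval b j = eigval b'' j then K else 0)" for b''
  have "of_nat K = (\<Sum>S\<in>Pow {..<k}. eigval_prod b S * trace (stab_elem S))"
    by (simp add: trace_stab_elem if_distrib[of "\<lambda>x. _ * x"] eigval_prod_def cong: if_cong)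
  also have "\<dots> = trace (mat_sum K K (\<lambda>S. eigval_prod b S \<cdot>\<^sub>m stab_elem S) (Pow {..<k}))"
    by (subst trace_mat_sum) (auto simp: trace_smult[OF gen_prod_carrier])
  also have "\<dots> = (\<Sum>b''<K. of_nat (c b''))"
    unfolding mat_sum_eigval_prod_stab_elem[OF b(1)] c_def
    by (subst trace_mat_sum) (auto simp: trace_smult[OF proj_carrier] trace_proj intro!: sum.cong)
  finally have "(\<Sum>b''<K. c b'') = K" by (metis of_nat_eq_iff of_nat_sum)
  moreover have "c b + c b' \<le> (\<Sum>b''<K. c b'')"
    using b ne by (subst sum.remove[of _ b], simp, simp, intro add_left_mono)
      (rule member_le_sum, auto)
  moreover have "c b = K" "c b' = K" using eq unfolding c_def by auto
  ultimately show False by simp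
qed

lemma proj_expansion:
  assumes b: "b < K"
  shows "proj b = mat_sum K K (\<lambda>S. (eigval_prod b S / of_nat K) \<cdot>\<^sub>m stab_elem S) (Pow {..<k})"
proof (rule eq_matI)
  fix i j assume "i < dim_row (mat_sum K K (\<lambda>S. (eigval_prod b S / of_nat K) \<cdot>\<^sub>m stab_elem S) (Pow {..<k}))"
    "j < dim_col (mat_sum K K (\<lambda>S. (eigval_prod b S / of_nat K) \<cdot>\<^sub>m stab_elem S) (Pow {..<k}))"
  then have ij: "i < K" "j < K" by auto
  have "mat_sum K K (\<lambda>S. (eigval_prod b S / of_nat K) \<cdot>\<^sub>m stab_elem S) (Pow {..<k}) $$ (i, j)
      = mat_sum K K (\<lambda>S. eigval_prod b S \<cdot>\<^sub>m stab_elem S) (Pow {..<k}) $$ (i, j) / of_nat K"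
    using ij by (simp add: sum_divide_distrib)
  also have "\<dots> = (\<Sum>b'<K. (if \<forall>j<k. eigval b j = eigval b' j then of_nat K else 0) * proj b' $$ (i, j)) / of_nat K"
    unfolding mat_sum_eigval_prod_stab_elem[OF b] using ij by simp
  also have "(\<Sum>b'<K. (if \<forall>j<k. eigval b j = eigval b' j then of_nat K else 0) * proj b' $$ (i, j))
      = (\<Sum>b'<K. if b' = b then of_nat K * proj b' $$ (i, j) else 0)"
    using eigval_signature_inj[OF b] by (intro sum.cong refl) auto
  also have "\<dots> / of_nat K = proj b $$ (i, j)" using b by simp
  finally show "proj b $$ (i, j) = mat_sum K K (\<lambda>S. (eigval_prod b S / of_nat K) \<cdot>\<^sub>m stab_elem S) (Pow {..<k}) $$ (i, j)" ..
qed (use b in auto)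

end


section \<open>Stabilizer states across the cut between the first n and the last m qubits\<close>

locale bipartite_stabilizer = stabilizer_group "n + m" \<Phi> P
  for n m :: nat and \<Phi> :: "nat \<Rightarrow> complex vec" and P :: "nat \<Rightarrow> (bool \<times> bool) list"
begin

abbreviation N :: nat where "N \<equiv> 2 ^ n"
abbreviation M :: nat where "M \<equiv> 2 ^ m"

lemma K_eq: "K = N * M"
  by (simp add: power_add)

definition label_A :: "nat set \<Rightarrow> (bool \<times> bool) list" where
  "label_A S = take n (label S)"

definition label_B :: "nat set \<Rightarrow> (bool \<times> bool) list" where
  "label_B S = drop n (label S)"

definition coeff :: "nat \<Rightarrow> nat set \<Rightarrow> complex" where
  "coeff b S = eigval_prod b S * elem_phase S"

definition stab_A :: "nat set set" where
  "stab_A = {S \<in> Pow {..<n + m}. set (label_B S) \<subseteq> {(False, False)}}"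

definition stab_B :: "nat set set" where
  "stab_B = {S \<in> Pow {..<n + m}. set (label_A S) \<subseteq> {(False, False)}}"

definition labels_A :: "(bool \<times> bool) list set" where
  "labels_A = label_A ` Pow {..<n + m}"

lemma length_label_A [simp]: "length (label_A S) = n"
  and length_label_B [simp]: "length (label_B S) = m"
  by (simp_all add: label_A_def label_B_def)

lemma pauli_mat_label_A_carrier [simp]: "pauli_mat (label_A S) \<in> carrier_mat N N"
  and pauli_mat_label_B_carrier [simp]: "pauli_mat (label_B S) \<in> carrier_mat M M"
  using pauli_mat_carrier[of "label_A S"] pauli_mat_carrier[of "label_B S"] by simp_all

lemma label_A_sym_diff:
  "S \<subseteq> {..<n + m} \<Longrightarrow> T \<subseteq> {..<n + m} \<Longrightarrow> label_A (sym_diff S T) = sym_add (label_A S) (label_A T)"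
  unfolding label_A_def by (simp add: label_sym_diff finite_subset take_sym_add)

lemma label_B_sym_diff:
  "S \<subseteq> {..<n + m} \<Longrightarrow> T \<subseteq> {..<n + m} \<Longrightarrow> label_B (sym_diff S T) = sym_add (label_B S) (label_B T)"
  unfolding label_B_def by (simp add: label_sym_diff finite_subset drop_sym_add)

lemma label_A_B_inj:
  "S \<subseteq> {..<n + m} \<Longrightarrow> T \<subseteq> {..<n + m} \<Longrightarrow> label_A S = label_A T \<Longrightarrow> label_B S = label_B T \<Longrightarrow> S = T"
  unfolding label_A_def label_B_def by (metis append_take_drop_id label_inj)

lemma stab_A_sub: "S \<in> stab_A \<Longrightarrow> S \<subseteq> {..<n + m}"
  and stab_B_sub: "S \<in> stab_B \<Longrightarrow> S \<subseteq> {..<n + m}"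
  unfolding stab_A_def stab_B_def by auto

lemma finite_stab_A: "finite stab_A" and finite_stab_B: "finite stab_B"
  unfolding stab_A_def stab_B_def by auto

lemma empty_in_stab_A: "{} \<in> stab_A" and empty_in_stab_B: "{} \<in> stab_B"
  using label_empty unfolding stab_A_def stab_B_def label_A_def label_B_def
  by (auto dest: in_set_takeD in_set_dropD)

lemma card_stab_A_pos: "card stab_A > 0" and card_stab_B_pos: "card stab_B > 0"
  using empty_in_stab_A empty_in_stab_B finite_stab_A finite_stab_B card_gt_0_iff by blast+

lemma sym_diff_in_stab_A:
  assumes S: "S \<in> stab_A" and T: "T \<in> stab_A"
  shows "sym_diff S T \<in> stab_A"
proof -
  have "label_B (sym_diff S T) = label_B S"
    using label_B_sym_diff[OF stab_A_sub[OF S] stab_A_sub[OF T]] sym_add_trivial_right[of "label_B T" "label_B S"] T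
    by (simp add: stab_A_def)
  then show ?thesis using S T unfolding stab_A_def by auto
qed

lemma inj_on_label_A_stab_A: "inj_on label_A stab_A"
proof (rule inj_onI)
  fix S T assume S: "S \<in> stab_A" and T: "T \<in> stab_A" and eq: "label_A S = label_A T"
  have "label_B S = label_B T"
    using S T unfolding stab_A_def by (auto intro: trivial_label_eq)
  then show "S = T" using label_A_B_inj stab_A_sub S T eq by blast
qed

lemma inj_on_label_B_stab_B: "inj_on label_B stab_B"
proof (rule inj_onI)
  fix S T assume S: "S \<in> stab_B" and T: "T \<in> stab_B" and eq: "label_B S = label_B T"
  have "label_A S = label_A T"
    using S T unfolding stab_B_def by (auto intro: trivial_label_eq)
  then show "S = T" using label_A_B_inj stab_B_sub S T eq by blast
qed

lemma stab_elem_kron: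
  "S \<subseteq> {..<n + m} \<Longrightarrow> stab_elem S = elem_phase S \<cdot>\<^sub>m kron (pauli_mat (label_A S)) (pauli_mat (label_B S))"
  unfolding label_A_def label_B_def
  using elem_phase(2)[of S] pauli_mat_append[of "take n (label S)" "drop n (label S)"] by simp

lemma coeff_square: "b < K \<Longrightarrow> S \<subseteq> {..<n + m} \<Longrightarrow> coeff b S * coeff b S = 1"
  unfolding coeff_def using eigval_prod_square elem_phase_square
  by (metis mult.assoc mult.left_commute mult_1_right)

lemma proj_expansion_kron:
  "b < K \<Longrightarrow> proj b = mat_sum K K
     (\<lambda>S. (coeff b S / of_nat K) \<cdot>\<^sub>m kron (pauli_mat (label_A S)) (pauli_mat (label_B S))) (Pow {..<n + m})"
  unfolding proj_expansion by (intro mat_sum_cong) (simp add: stab_elem_kron coeff_def smult_smult_mat)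

lemma kron_pauli_carrier: "kron (pauli_mat (label_A S)) (pauli_mat (label_B S)) \<in> carrier_mat (N * M) (N * M)"
  using kron_carrier[of "pauli_mat (label_A S)" "pauli_mat (label_B S)"] by simp

lemma reduced_state_expansion:
  assumes b: "b < K"
  shows "reduced_state n m (\<Phi> b) = mat_sum N N (\<lambda>S. (coeff b S / of_nat N) \<cdot>\<^sub>m pauli_mat (label_A S)) stab_A"
proof -
  have "reduced_state n m (\<Phi> b) = partial_trace_right N M (proj b)"
    unfolding proj_def using b basis_carrier by (simp add: reduced_state_eq_partial_trace)
  also have "\<dots> = mat_sum N N (\<lambda>S. (coeff b S / of_nat K * trace (pauli_mat (label_B S))) \<cdot>\<^sub>m
                     pauli_mat (label_A S)) (Pow {..<n + m})"
    unfolding proj_expansion_kron[OF b] K_eq partial_trace_right_mat_sum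
    by (intro mat_sum_cong) (simp add: partial_trace_right_smult[OF kron_pauli_carrier]
        partial_trace_right_kron smult_smult_mat)
  also have "\<dots> = mat_sum N N (\<lambda>S. if S \<in> stab_A then (coeff b S / of_nat N) \<cdot>\<^sub>m pauli_mat (label_A S)
                     else 0\<^sub>m N N) (Pow {..<n + m})"
    by (intro mat_sum_cong) (auto simp: stab_A_def trace_pauli_mat K_eq)
  also have "\<dots> = mat_sum N N (\<lambda>S. (coeff b S / of_nat N) \<cdot>\<^sub>m pauli_mat (label_A S)) stab_A"
    by (simp add: mat_sum_filter stab_A_def)
  finally show ?thesis .
qed

lemma reduced_state_B_expansion:
  assumes b: "b < K"
  shows "partial_trace_left N M (proj b) = mat_sum M M (\<lambda>S. (coeff b S / of_nat M) \<cdot>\<^sub>m pauli_mat (label_B S)) stab_B"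
proof -
  have "partial_trace_left N M (proj b) = mat_sum M M (\<lambda>S. (coeff b S / of_nat K * trace (pauli_mat (label_A S))) \<cdot>\<^sub>m
                     pauli_mat (label_B S)) (Pow {..<n + m})"
    unfolding proj_expansion_kron[OF b] K_eq partial_trace_left_mat_sum
    by (intro mat_sum_cong) (simp add: partial_trace_left_smult[OF kron_pauli_carrier]
        partial_trace_left_kron smult_smult_mat)
  also have "\<dots> = mat_sum M M (\<lambda>S. if S \<in> stab_B then (coeff b S / of_nat M) \<cdot>\<^sub>m pauli_mat (label_B S)
                     else 0\<^sub>m M M) (Pow {..<n + m})"
    by (intro mat_sum_cong) (auto simp: stab_B_def trace_pauli_mat K_eq)
  also have "\<dots> = mat_sum M M (\<lambda>S. (coeff b S / of_nat M) \<cdot>\<^sub>m pauli_mat (label_B S)) stab_B"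
    by (simp add: mat_sum_filter stab_B_def)
  finally show ?thesis .
qed

text \<open>Both reductions of a pure state have the same purity; computed from the Pauli expansions,
  the two purities are \<open>|stab_A| / N\<close> and \<open>|stab_B| / M\<close>.\<close>

lemma card_stab_A_B: "card stab_A * M = card stab_B * N"
proof -
  have b: "0 < K" by simp
  have "trace (reduced_state n m (\<Phi> 0) * reduced_state n m (\<Phi> 0)) = of_nat (card stab_A) * 2 ^ n / (of_nat N * of_nat N)"
    unfolding reduced_state_expansion[OF b]
    by (rule trace_square_pauli_sum[OF finite_stab_A _ inj_on_label_A_stab_A]) (auto simp: coeff_square stab_A_sub)
  moreover have "trace (partial_trace_left N M (proj 0) * partial_trace_left N M (proj 0)) =
      of_nat (card stab_B) * 2 ^ m / (of_nat M * of_nat M)"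
    unfolding reduced_state_B_expansion[OF b]
    by (rule trace_square_pauli_sum[OF finite_stab_B _ inj_on_label_B_stab_B]) (auto simp: coeff_square stab_B_sub)
  moreover have "trace (reduced_state n m (\<Phi> 0) * reduced_state n m (\<Phi> 0)) =
      trace (partial_trace_left N M (proj 0) * partial_trace_left N M (proj 0))"
    unfolding proj_def using basis_carrier[OF b] K_eq
    by (simp add: reduced_state_eq_partial_trace trace_partial_trace_square_eq)
  ultimately have "of_nat (card stab_A * M) = (of_nat (card stab_B * N) :: complex)"
    by (simp add: field_simps)
  then show ?thesis using of_nat_eq_iff by blast
qed

lemma kron_coeff_pauli_A:
  assumes b: "b < K" and S: "S \<in> stab_A"
  shows "kron (coeff b S \<cdot>\<^sub>m pauli_mat (label_A S)) (1\<^sub>m M) = eigval_prod b S \<cdot>\<^sub>m stab_elem S"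
proof -
  have "pauli_mat (label_B S) = 1\<^sub>m M" using S pauli_mat_trivial[of "label_B S"] by (simp add: stab_A_def)
  then show ?thesis using stab_A_sub[OF S]
    by (simp add: stab_elem_kron kron_smult_left coeff_def smult_smult_mat)
qed

lemma coeff_pauli_A_mult:
  assumes b: "b < K" and S: "S \<in> stab_A" and T: "T \<in> stab_A"
  shows "(coeff b S \<cdot>\<^sub>m pauli_mat (label_A S)) * (coeff b T \<cdot>\<^sub>m pauli_mat (label_A T)) =
         coeff b (sym_diff S T) \<cdot>\<^sub>m pauli_mat (label_A (sym_diff S T))"
proof (rule kron_one_mat_right_inj)
  have "kron ((coeff b S \<cdot>\<^sub>m pauli_mat (label_A S)) * (coeff b T \<cdot>\<^sub>m pauli_mat (label_A T))) (1\<^sub>m M)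
      = kron (coeff b S \<cdot>\<^sub>m pauli_mat (label_A S)) (1\<^sub>m M) * kron (coeff b T \<cdot>\<^sub>m pauli_mat (label_A T)) (1\<^sub>m M)"
    using kron_mult[of "coeff b S \<cdot>\<^sub>m pauli_mat (label_A S)" N N "1\<^sub>m M" M M
        "coeff b T \<cdot>\<^sub>m pauli_mat (label_A T)" N "1\<^sub>m M" M] by simp
  also have "\<dots> = (eigval_prod b S * eigval_prod b T) \<cdot>\<^sub>m (stab_elem S * stab_elem T)"
    unfolding kron_coeff_pauli_A[OF b S] kron_coeff_pauli_A[OF b T]
    by (simp add: mult_smult_distrib[of _ K K _ K] mult_smult_assoc_mat[of _ K K _ K] smult_smult_mat mult.commute)
  also have "\<dots> = kron (coeff b (sym_diff S T) \<cdot>\<^sub>m pauli_mat (label_A (sym_diff S T))) (1\<^sub>m M)"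
    using stab_A_sub[OF S] stab_A_sub[OF T]
    by (simp add: gen_prod_mult eigval_prod_sym_diff[OF b] kron_coeff_pauli_A[OF b sym_diff_in_stab_A[OF S T]])
  finally show "kron ((coeff b S \<cdot>\<^sub>m pauli_mat (label_A S)) * (coeff b T \<cdot>\<^sub>m pauli_mat (label_A T))) (1\<^sub>m M)
      = kron (coeff b (sym_diff S T) \<cdot>\<^sub>m pauli_mat (label_A (sym_diff S T))) (1\<^sub>m M)" .
qed (auto intro!: mult_carrier_mat[of _ N N])

lemma reduced_state_square:
  assumes b: "b < K"
  shows "reduced_state n m (\<Phi> b) * reduced_state n m (\<Phi> b) =
         (of_nat (card stab_A) / of_nat N) \<cdot>\<^sub>m reduced_state n m (\<Phi> b)"
proof -
  have "reduced_state n m (\<Phi> b) * reduced_state n m (\<Phi> b) =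
        (1 / of_nat N * of_nat (card stab_A)) \<cdot>\<^sub>m reduced_state n m (\<Phi> b)"
    unfolding reduced_state_expansion[OF b]
  proof (rule mat_sum_square_group[where mul = sym_diff])
    fix S T assume S: "S \<in> stab_A" and T: "T \<in> stab_A"
    show "((coeff b S / of_nat N) \<cdot>\<^sub>m pauli_mat (label_A S)) * ((coeff b T / of_nat N) \<cdot>\<^sub>m pauli_mat (label_A T)) =
          (1 / of_nat N) \<cdot>\<^sub>m ((coeff b (sym_diff S T) / of_nat N) \<cdot>\<^sub>m pauli_mat (label_A (sym_diff S T)))"
    proof -
      have "((coeff b S / of_nat N) \<cdot>\<^sub>m pauli_mat (label_A S)) * ((coeff b T / of_nat N) \<cdot>\<^sub>m pauli_mat (label_A T)) =
            (1 / of_nat N * (1 / of_nat N)) \<cdot>\<^sub>m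
              ((coeff b S \<cdot>\<^sub>m pauli_mat (label_A S)) * (coeff b T \<cdot>\<^sub>m pauli_mat (label_A T)))"
        by (simp add: mult_smult_distrib[of _ N N _ N] mult_smult_assoc_mat[of _ N N _ N] smult_smult_mat mult_ac)
      then show ?thesis unfolding coeff_pauli_A_mult[OF b S T] by (simp add: smult_smult_mat)
    qed
    show "bij_betw (sym_diff S) stab_A stab_A"
      using S by (intro bij_betwI[of _ _ _ "sym_diff S"]) (auto intro: sym_diff_in_stab_A)
  qed auto
  then show ?thesis by simp
qed

lemma trace_reduced_state:
  assumes b: "b < K"
  shows "trace (reduced_state n m (\<Phi> b)) = 1"
proof -
  have "reduced_state n m (\<Phi> b) = partial_trace_right N M (ket (\<Phi> b) * bra (\<Phi> b))"
    using basis_carrier[OF b] by (rule reduced_state_eq_partial_trace)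
  moreover have "ket (\<Phi> b) * bra (\<Phi> b) \<in> carrier_mat (N * M) (N * M)"
    using ket_bra_carrier[of "\<Phi> b"] b K_eq by simp
  ultimately show ?thesis
    using basis_orthonormal[OF b b] by (simp add: trace_partial_trace_right trace_ket_bra)
qed

lemma entanglement_entropy_eq:
  assumes b: "b < K"
  shows "entanglement_entropy n m (\<Phi> b) = real n - log 2 (card stab_A)"
proof -
  have "entanglement_entropy n m (\<Phi> b) = - log 2 (card stab_A / N)"
    unfolding entanglement_entropy_def
    by (rule von_neumann_entropy_scaled_projection[of _ N])
      (use reduced_state_square[OF b] trace_reduced_state[OF b] in \<open>simp_all add: reduced_state_def\<close>)
  then show ?thesis using card_stab_A_pos by (simp add: log_divide)
qed

lemma label_A_fiber:
  assumes S0: "S0 \<subseteq> {..<n + m}"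
  shows "{S \<in> Pow {..<n + m}. label_A S = label_A S0} = sym_diff S0 ` stab_B"
proof
  show "{S \<in> Pow {..<n + m}. label_A S = label_A S0} \<subseteq> sym_diff S0 ` stab_B"
  proof
    fix S assume "S \<in> {S \<in> Pow {..<n + m}. label_A S = label_A S0}"
    then have S: "S \<subseteq> {..<n + m}" and eq: "label_A S = label_A S0" by auto
    have "sym_diff S0 S \<in> stab_B"
      using label_A_sym_diff[OF S0 S] S0 S sym_add_self[of "label_A S0"] unfolding stab_B_def eq by auto
    moreover have "S = sym_diff S0 (sym_diff S0 S)" by blast
    ultimately show "S \<in> sym_diff S0 ` stab_B" by blast
  qed
  show "sym_diff S0 ` stab_B \<subseteq> {S \<in> Pow {..<n + m}. label_A S = label_A S0}"
  proof
    fix S assume "S \<in> sym_diff S0 ` stab_B"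
    then obtain U where U: "U \<in> stab_B" and S: "S = sym_diff S0 U" by blast
    have "label_A S = label_A S0"
      unfolding S label_A_sym_diff[OF S0 stab_B_sub[OF U]] using U
      by (intro sym_add_trivial_right) (auto simp: stab_B_def)
    then show "S \<in> {S \<in> Pow {..<n + m}. label_A S = label_A S0}" using S0 stab_B_sub[OF U] S by auto
  qed
qed

lemma card_labels_A_mult_card_stab_B: "card labels_A * card stab_B = K"
proof -
  have "Pow {..<n + m} = (\<Union>w\<in>labels_A. {S \<in> Pow {..<n + m}. label_A S = w})" unfolding labels_A_def by auto
  then have "card (Pow {..<n + m}) = card (\<Union>w\<in>labels_A. {S \<in> Pow {..<n + m}. label_A S = w})"
    by (rule arg_cong)
  also have "\<dots> = (\<Sum>w\<in>labels_A. card {S \<in> Pow {..<n + m}. label_A S = w})"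
    by (rule card_UN_disjoint) (auto simp: labels_A_def)
  also have "\<dots> = (\<Sum>w\<in>labels_A. card stab_B)"
  proof (rule sum.cong[OF refl])
    fix w assume "w \<in> labels_A"
    then obtain S0 where S0: "S0 \<subseteq> {..<n + m}" and w: "w = label_A S0" unfolding labels_A_def by blast
    have "inj_on (sym_diff S0) stab_B" by (rule inj_onI) blast
    then show "card {S \<in> Pow {..<n + m}. label_A S = w} = card stab_B"
      unfolding w label_A_fiber[OF S0] by (rule card_image)
  qed
  finally show ?thesis by (simp add: card_Pow)
qed

lemma card_labels_A_mult_card_stab_A: "card labels_A * card stab_A = N * N"
proof -
  have "card labels_A * card stab_A * M = card labels_A * card stab_B * N"
    using card_stab_A_B by (simp add: mult.assoc)
  then show ?thesis using card_labels_A_mult_card_stab_B K_eq by simp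
qed

end


section \<open>A product state with no vanishing Pauli expectation\<close>

text \<open>The qubit \<open>(3/5, (12 + 16 i)/25)\<close> has Bloch vector \<open>(72/125, 96/125, -7/25)\<close>, with no zero
  component, so every Pauli string has nonzero expectation in its tensor powers.\<close>

definition tilted_qubit :: "complex vec" where
  "tilted_qubit = vec 2 (\<lambda>i. if i = 0 then 3/5 else Complex (12/25) (16/25))"

primrec tilted_state :: "nat \<Rightarrow> complex vec" where
  "tilted_state 0 = vec 1 (\<lambda>_. 1)"
| "tilted_state (Suc m) = vec (2 * 2 ^ m) (\<lambda>i. tilted_qubit $ (i div 2 ^ m) * tilted_state m $ (i mod 2 ^ m))"

lemma dim_tilted_state [simp]: "dim_vec (tilted_state m) = 2 ^ m"
  by (induct m) auto

lemma ket_tilted_state_Suc: "ket (tilted_state (Suc m)) = kron (ket tilted_qubit) (ket (tilted_state m))"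
  by (rule eq_matI) (auto simp: ket_def tilted_qubit_def less_mult_imp_div_less)

lemma bra_tilted_state_Suc: "bra (tilted_state (Suc m)) = kron (bra tilted_qubit) (bra (tilted_state m))"
  by (rule eq_matI) (auto simp: bra_def tilted_qubit_def less_mult_imp_div_less)

lemma expectation_tilted_qubit:
  "expectation tilted_qubit (pauli1 (False, False)) = 1"
  "expectation tilted_qubit (pauli1 (True, False)) = 72/125"
  "expectation tilted_qubit (pauli1 (False, True)) = -7/25"
  "expectation tilted_qubit (pauli1 (True, True)) = 96/125"
  unfolding expectation_def pauli1_eq_mat bra_def ket_def tilted_qubit_def
  by (simp_all add: scalar_prod_def numeral_2_eq_2 pauli1_entry_def complex_eq_iff)

lemma expectation_tilted_state:
  "length l = m \<Longrightarrow> expectation (tilted_state m) (pauli_mat l) = (\<Prod>q\<leftarrow>l. expectation tilted_qubit (pauli1 q))"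
proof (induct m arbitrary: l)
  case 0
  then show ?case by (simp add: expectation_def bra_def ket_def scalar_prod_def)
next
  case (Suc m)
  then obtain q l' where l: "l = q # l'" and len: "length l' = m" by (cases l) auto
  have carr: "bra tilted_qubit \<in> carrier_mat 1 2" "ket tilted_qubit \<in> carrier_mat 2 1"
    "bra (tilted_state m) \<in> carrier_mat 1 (2 ^ m)" "ket (tilted_state m) \<in> carrier_mat (2 ^ m) 1"
    "pauli_mat l' \<in> carrier_mat (2 ^ m) (2 ^ m)"
    using len bra_carrier[of tilted_qubit] ket_carrier[of tilted_qubit] pauli_mat_carrier[of l']
      bra_carrier[of "tilted_state m"] ket_carrier[of "tilted_state m"]
    by (simp_all add: tilted_qubit_def)
  have "bra (tilted_state (Suc m)) * pauli_mat l * ket (tilted_state (Suc m))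
      = kron (bra tilted_qubit * pauli1 q) (bra (tilted_state m) * pauli_mat l') *
        kron (ket tilted_qubit) (ket (tilted_state m))"
    unfolding l bra_tilted_state_Suc ket_tilted_state_Suc pauli_mat.simps
    by (subst kron_mult[OF carr(1) carr(3) pauli1_carrier carr(5)]) simp
  also have "\<dots> = kron (bra tilted_qubit * pauli1 q * ket tilted_qubit)
                       (bra (tilted_state m) * pauli_mat l' * ket (tilted_state m))"
    by (rule kron_mult[OF mult_carrier_mat[OF carr(1) pauli1_carrier] mult_carrier_mat[OF carr(3) carr(5)]
          carr(2) carr(4)])
  finally show ?case using Suc(1)[OF len] carr unfolding l expectation_def
    by (simp add: kron_right_1x1 mult_carrier_mat[of _ 1 2])
qed

lemma expectation_tilted_state_nonzero:
  "length l = m \<Longrightarrow> expectation (tilted_state m) (pauli_mat l) \<noteq> 0"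
proof -
  have "expectation tilted_qubit (pauli1 (a, b)) \<noteq> 0" for a b
    by (cases a; cases b) (simp_all add: expectation_tilted_qubit)
  then show "length l = m \<Longrightarrow> ?thesis"
    by (auto simp: expectation_tilted_state prod_list_zero_iff split: prod.splits)
qed

lemma unit_state_tilted_state: "unit_state m (tilted_state m)"
proof -
  have "expectation (tilted_state m) (pauli_mat (replicate m (False, False))) = 1"
    by (simp add: expectation_tilted_state expectation_tilted_qubit)
  then have "expectation (tilted_state m) (1\<^sub>m (2 ^ m)) = 1"
    using pauli_mat_trivial[of "replicate m (False, False)"] by (simp add: set_replicate_conv_if)
  moreover have "expectation (tilted_state m) (1\<^sub>m (2 ^ m)) = tilted_state m \<bullet>c tilted_state m"
    unfolding expectation_def using right_mult_one_mat[OF bra_carrier[of "tilted_state m"]]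
    by (simp add: bra_def ket_def scalar_prod_def mult.commute del: tilted_state.simps)
  ultimately show ?thesis unfolding unit_state_def by (simp add: carrier_vecI)
qed


section \<open>The span of the POVM\<close>

context bipartite_stabilizer
begin

lemma sandwich_smult_kron:
  assumes \<psi>: "\<psi> \<in> carrier_vec M"
  shows "kron (1\<^sub>m N) (bra \<psi>) * (c \<cdot>\<^sub>m kron (pauli_mat (label_A S)) (pauli_mat (label_B S))) * kron (1\<^sub>m N) (ket \<psi>)
       = (c * expectation \<psi> (pauli_mat (label_B S))) \<cdot>\<^sub>m pauli_mat (label_A S)"
proof -
  have "kron (1\<^sub>m N) (bra \<psi>) \<in> carrier_mat N (N * M)" "kron (1\<^sub>m N) (ket \<psi>) \<in> carrier_mat (N * M) N"
    using \<psi> by (auto simp: carrier_vecD)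
  then show ?thesis
    using \<psi> by (simp add: sandwich_smult[OF _ kron_pauli_carrier] kron_sandwich smult_smult_mat)
qed

lemma povm_elem_expansion:
  assumes \<psi>: "\<psi> \<in> carrier_vec M" and b: "b < K"
  shows "povm_elem n \<psi> (\<Phi> b) =
    mat_sum N N (\<lambda>S. (coeff b S / of_nat K * expectation \<psi> (pauli_mat (label_B S))) \<cdot>\<^sub>m pauli_mat (label_A S))
      (Pow {..<n + m})"
proof -
  have L: "kron (1\<^sub>m N) (bra \<psi>) \<in> carrier_mat N (N * M)" and R: "kron (1\<^sub>m N) (ket \<psi>) \<in> carrier_mat (N * M) N"
    using \<psi> by (auto simp: carrier_vecD)
  show ?thesis
    unfolding povm_elem_def proj_def[symmetric] proj_expansion_kron[OF b] K_eq
    by (subst sandwich_mat_sum[OF L R]) (auto intro!: mat_sum_cong simp: kron_pauli_carrier sandwich_smult_kron[OF \<psi>])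
qed

lemma mat_sum_eigval_prod_povm_elem:
  assumes \<psi>: "\<psi> \<in> carrier_vec M" and S: "S \<subseteq> {..<n + m}"
  shows "mat_sum N N (\<lambda>b. eigval_prod b S \<cdot>\<^sub>m povm_elem n \<psi> (\<Phi> b)) {..<K} =
         (elem_phase S * expectation \<psi> (pauli_mat (label_B S))) \<cdot>\<^sub>m pauli_mat (label_A S)"
proof -
  have L: "kron (1\<^sub>m N) (bra \<psi>) \<in> carrier_mat N K" and R: "kron (1\<^sub>m N) (ket \<psi>) \<in> carrier_mat K N"
    using \<psi> K_eq by (auto simp: carrier_vecD)
  have "mat_sum N N (\<lambda>b. eigval_prod b S \<cdot>\<^sub>m povm_elem n \<psi> (\<Phi> b)) {..<K} =
        kron (1\<^sub>m N) (bra \<psi>) * stab_elem S * kron (1\<^sub>m N) (ket \<psi>)"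
    unfolding stab_elem_spectral[OF S] povm_elem_def proj_def[symmetric]
    by (subst sandwich_mat_sum[OF L R]) (auto intro!: mat_sum_cong simp: sandwich_smult[OF L _ R])
  also have "\<dots> = (elem_phase S * expectation \<psi> (pauli_mat (label_B S))) \<cdot>\<^sub>m pauli_mat (label_A S)"
    unfolding stab_elem_kron[OF S] K_eq by (rule sandwich_smult_kron[OF \<psi>])
  finally show ?thesis .
qed

lemma povm_set_eq: "{povm_elem n \<psi> (\<Phi> b) | b. b < K} = (\<lambda>b. povm_elem n \<psi> (\<Phi> b)) ` {..<K}"
  by auto

lemma povm_set_carrier: "\<psi> \<in> carrier_vec M \<Longrightarrow> {povm_elem n \<psi> (\<Phi> b) | b. b < K} \<subseteq> carrier_mat N N"
  using povm_elem_expansion by auto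

lemma pauli_labels_A_carrier: "pauli_mat ` labels_A \<subseteq> carrier_mat N N"
  unfolding labels_A_def by auto

lemma povm_set_subset_span:
  assumes \<psi>: "\<psi> \<in> carrier_vec M"
  shows "{povm_elem n \<psi> (\<Phi> b) | b. b < K} \<subseteq> mat_span N (pauli_mat ` labels_A)"
proof -
  have "pauli_mat (label_A S) \<in> mat_span N (pauli_mat ` labels_A)" if "S \<subseteq> {..<n + m}" for S
    using that by (intro in_mat_span[OF pauli_labels_A_carrier]) (auto simp: labels_A_def)
  then show ?thesis using povm_elem_expansion[OF \<psi>]
    by (auto intro!: mat_sum_in_mat_span[OF pauli_labels_A_carrier] smult_in_mat_span[OF pauli_labels_A_carrier])
qed

lemma s_mu_le_card_labels_A:
  assumes \<psi>: "\<psi> \<in> carrier_vec M"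
  shows "s_mu n m \<Phi> \<psi> \<le> card labels_A"
proof -
  have "s_mu n m \<Phi> \<psi> \<le> card (pauli_mat ` labels_A)"
    unfolding s_mu_def using povm_set_carrier[OF \<psi>] pauli_labels_A_carrier povm_set_subset_span[OF \<psi>]
    by (intro span_dim_le_card) (auto simp: povm_set_eq labels_A_def)
  also have "\<dots> \<le> card labels_A" by (rule card_image_le) (simp add: labels_A_def)
  finally show ?thesis .
qed

lemma s_mu_eq_card_labels_A:
  assumes \<psi>: "\<psi> \<in> carrier_vec M" and nz: "\<And>l. length l = m \<Longrightarrow> expectation \<psi> (pauli_mat l) \<noteq> 0"
  shows "s_mu n m \<Phi> \<psi> = card labels_A"
proof -
  let ?U = "{povm_elem n \<psi> (\<Phi> b) | b. b < K}"
  have "pauli_mat (label_A S) \<in> mat_span N ?U" if S: "S \<subseteq> {..<n + m}" for S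
  proof -
    let ?c = "elem_phase S * expectation \<psi> (pauli_mat (label_B S))"
    have "?c \<noteq> 0" using elem_phase(1)[OF S] nz[of "label_B S"] by simp
    moreover have "?c \<cdot>\<^sub>m pauli_mat (label_A S) \<in> mat_span N ?U"
      unfolding mat_sum_eigval_prod_povm_elem[OF \<psi> S, symmetric]
      by (intro mat_sum_in_mat_span[OF povm_set_carrier[OF \<psi>]] smult_in_mat_span[OF povm_set_carrier[OF \<psi>]]
          in_mat_span[OF povm_set_carrier[OF \<psi>]]) auto
    then have "(1 / ?c) \<cdot>\<^sub>m (?c \<cdot>\<^sub>m pauli_mat (label_A S)) \<in> mat_span N ?U"
      by (rule smult_in_mat_span[OF povm_set_carrier[OF \<psi>]])
    ultimately show ?thesis by (simp add: smult_smult_mat)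
  qed
  then have "mat_span N ?U = mat_span N (pauli_mat ` labels_A)"
    using mat_span_subset[OF povm_set_carrier[OF \<psi>] pauli_labels_A_carrier povm_set_subset_span[OF \<psi>]]
      mat_span_subset[OF pauli_labels_A_carrier povm_set_carrier[OF \<psi>]]
    unfolding labels_A_def by blast
  then have "s_mu n m \<Phi> \<psi> = span_dim N (pauli_mat ` labels_A)" unfolding s_mu_def span_dim_def by simp
  also have "\<dots> = card (pauli_mat ` labels_A)"
    by (rule span_dim_eq_card[OF pauli_labels_A_carrier _ not_mat_lin_dep_pauli_mat]) (auto simp: labels_A_def)
  also have "\<dots> = card labels_A"
    by (rule card_image, rule inj_onI, rule pauli_mat_inj) (auto simp: labels_A_def)
  finally show ?thesis .
qed

lemma card_labels_A_eq_powr: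
  assumes b: "b < K"
  shows "real (card labels_A) = 2 powr (real n + entanglement_entropy n m (\<Phi> b))"
proof -
  have "(2::real) powr (2 * real n) = (2 powr 2) powr real n" by (simp only: powr_powr)
  also have "\<dots> = real (N * N)" by (simp add: powr_realpow power_mult_distrib[symmetric])
  finally have "2 powr (real n + entanglement_entropy n m (\<Phi> b)) = real (N * N) / 2 powr log 2 (card stab_A)"
    unfolding entanglement_entropy_eq[OF b] by (simp add: powr_diff)
  also have "\<dots> = real (N * N) / real (card stab_A)"
    using card_stab_A_pos by simp
  also have "\<dots> = real (card labels_A)"
    using card_labels_A_mult_card_stab_A card_stab_A_pos by (metis nonzero_mult_div_cancel_right of_nat_0_less_iff
        of_nat_mult order_less_irrefl)
  finally show ?thesis ..
qed

lemma card_labels_A_le: "card labels_A \<le> 4 ^ n"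
proof -
  have "card (UNIV :: (bool \<times> bool) set) = 4"
    by (simp add: UNIV_Times_UNIV[symmetric] card_cartesian_product del: UNIV_Times_UNIV)
  then have fin: "finite {l :: (bool \<times> bool) list. length l = n}"
    and card: "card {l :: (bool \<times> bool) list. length l = n} = 4 ^ n"
    using finite_lists_length_eq[of "UNIV :: (bool \<times> bool) set" n]
      card_lists_length_eq[of "UNIV :: (bool \<times> bool) set" n] by simp_all
  have "card labels_A \<le> card {l :: (bool \<times> bool) list. length l = n}"
    by (rule card_mono[OF fin]) (auto simp: labels_A_def)
  then show ?thesis unfolding card .
qed

lemma card_labels_A_eq_4_pow_iff:
  assumes b: "b < K"
  shows "card labels_A = 4 ^ n \<longleftrightarrow> n \<le> m \<and> entanglement_entropy n m (\<Phi> b) = real n"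
proof -
  have labels: "card labels_A = 4 ^ n \<longleftrightarrow> card stab_A = 1"
    using card_labels_A_mult_card_stab_A card_stab_A_pos
    by (auto simp: power_mult_distrib[symmetric])
  have entropy: "card stab_A = 1 \<longleftrightarrow> entanglement_entropy n m (\<Phi> b) = real n"
    unfolding entanglement_entropy_eq[OF b]
  proof
    assume "real n - log 2 (card stab_A) = real n"
    then have "real (card stab_A) = 2 powr 0"
      using powr_log_cancel[of 2 "real (card stab_A)"] card_stab_A_pos by simp
    then show "card stab_A = 1" by simp
  qed simp
  have "card stab_A = 1 \<Longrightarrow> N \<le> M" using card_stab_A_B card_stab_B_pos by simp
  then show ?thesis using labels entropy by auto
qed

end

theorem theorem3:
  fixes n m :: nat and \<Phi> :: "nat \<Rightarrow> complex vec"
  assumes "stabilizer_basis (n + m) \<Phi>"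
  shows "(\<forall>\<psi>. unit_state m \<psi> \<longrightarrow>
            (\<forall>b < 2 ^ (n + m). real (s_mu n m \<Phi> \<psi>) \<le> 2 powr (real n + entanglement_entropy n m (\<Phi> b))))
       \<and> (\<forall>b < 2 ^ (n + m).
            (\<exists>\<psi>. unit_state m \<psi> \<and> s_mu n m \<Phi> \<psi> = 4 ^ n)
              \<longleftrightarrow> (n \<le> m \<and> entanglement_entropy n m (\<Phi> b) = real n))"
proof -
  obtain P where "stabilizer_group (n + m) \<Phi> P"
    using stabilizer_basis_imp_stabilizer_group[OF assms] ..
  then interpret bipartite_stabilizer n m \<Phi> P unfolding bipartite_stabilizer_def .
  have unit_carrier: "unit_state m \<psi> \<Longrightarrow> \<psi> \<in> carrier_vec M" for \<psi> by (simp add: unit_state_def)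
  have IC_iff: "(\<exists>\<psi>. unit_state m \<psi> \<and> s_mu n m \<Phi> \<psi> = 4 ^ n) \<longleftrightarrow> card labels_A = 4 ^ n"
    using s_mu_le_card_labels_A[OF unit_carrier] card_labels_A_le unit_state_tilted_state
      s_mu_eq_card_labels_A[OF unit_carrier[OF unit_state_tilted_state] expectation_tilted_state_nonzero]
    by (metis le_antisym)
  show ?thesis
    using s_mu_le_card_labels_A[OF unit_carrier] card_labels_A_eq_powr card_labels_A_eq_4_pow_iff IC_iff
    by (metis of_nat_le_iff)
qed

end
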